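(* Let $F:\mathbb{R}^n\rightrightarrows\mathbb{R}^n$ be continuous with $F(x)$ nonempty, compact and convex for all $x$, and assume $\Sigma:\dot x\in F(x)$ is forward complete. Then for each $x\in\mathbb{R}^n$ and each continuous $\epsilon:\mathbb{R}^n\to\mathbb{R}_{>0}$ there exists $T>0$ such that for each $t\in(0,T]$ there exists $\delta>0$ such that for each $y\in R^b_\Sigma(t,x)\setminus\{x\}$, $$y+\delta\mathbb{B}\subset R^b_{\Sigma_\epsilon}(t,x),\qquad x+\delta\mathbb{B}\subset R^b_{\Sigma_\epsilon}(-t,y)=R^b_{\Sigma^-_\epsilon}(t,y).$$
   Context: $\mathbb{B}$ is the closed unit ball. Continuity of set-valued maps means upper and lower semicontinuity. Solutions of a differential inclusion $\dot x\in G(x)$ are locally absolutely continuous functions on an interval containing $0$ (possibly extending to negative times) satisfying $\dot\phi(t)\in G(\phi(t))$ a.e.; maximal solutions are non-extendable; $\mathcal{S}_{\Sigma'}(x)$ is the set of maximal solutions of $\Sigma'$ with $\phi(0)=x$. Forward complete: each maximal solution is defined on an interval unbounded to the right. $\Sigma_\epsilon$: $\dot x\in F(x)+\epsilon(x)\mathbb{B}$; $\Sigma^-$: $\dot x\in -F(x)$; $\Sigma^-_\epsilon$: $\dot x\in -F(x)+\epsilon(x)\mathbb{B}$. For $t\ge0$: $R^b_{\Sigma'}(t,x):=\{\phi(s):\phi\in\mathcal{S}_{\Sigma'}(x),\ s\in\mathrm{dom}\,\phi\cap[0,t],\ \nexists s'\in[0,t]\cap\mathrm{dom}\,\phi,\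 s'>s\}$; for $t\le0$: $R^b_{\Sigma'}(t,x):=\{\phi(s):\phi\in\mathcal{S}_{\Sigma'}(x),\ s\in\mathrm{dom}\,\phi\cap[t,0],\ \nexists s'\in[t,0]\cap\mathrm{dom}\,\phi,\ s'<s\}$. *)

theory Defs
  imports "HOL-Analysis.Analysis"
begin

definition usc_setmap :: "('a::topological_space \<Rightarrow> 'b::topological_space set) \<Rightarrow> bool" where
  "usc_setmap G \<longleftrightarrow> (\<forall>x U. open U \<and> G x \<subseteq> U \<longrightarrow> (\<forall>\<^sub>F y in nhds x. G y \<subseteq> U))"

definition lsc_setmap :: "('a::topological_space \<Rightarrow> 'b::topological_space set) \<Rightarrow> bool" where
  "lsc_setmap G \<longleftrightarrow> (\<forall>x U. open U \<and> G x \<inter> U \<noteq> {} \<longrightarrow> (\<forall>\<^sub>F y in nhds x. G y \<inter> U \<noteq> {}))"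

definition continuous_setmap :: "('a::topological_space \<Rightarrow> 'b::topological_space set) \<Rightarrow> bool" where
  "continuous_setmap G \<longleftrightarrow> usc_setmap G \<and> lsc_setmap G"

definition abs_cont_on :: "real \<Rightarrow> real \<Rightarrow> (real \<Rightarrow> 'a::real_normed_vector) \<Rightarrow> bool" where
  "abs_cont_on a b f \<longleftrightarrow>
     (\<forall>e>0. \<exists>d>0. \<forall>(n::nat) (l::nat \<Rightarrow> real) (r::nat \<Rightarrow> real).
        (\<forall>k<n. a \<le> l k \<and> l k \<le> r k \<and> r k \<le> b) \<and>
        (\<forall>i<n. \<forall>j<n. i \<noteq> j \<longrightarrow> {l i<..<r i} \<inter> {l j<..<r j} = {}) \<and>
        (\<Sum>k<n. r k - l k) < d
        \<longrightarrow> (\<Sum>k<n. norm (f (r k) - f (l k))) < e)"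

definition loc_abs_cont_on :: "real set \<Rightarrow> (real \<Rightarrow> 'a::real_normed_vector) \<Rightarrow> bool" where
  "loc_abs_cont_on I f \<longleftrightarrow> (\<forall>a b. {a..b} \<subseteq> I \<longrightarrow> abs_cont_on a b f)"

text \<open>Values of phi outside I are irrelevant.\<close>
definition is_solution :: "('a::euclidean_space \<Rightarrow> 'a set) \<Rightarrow> real set \<Rightarrow> (real \<Rightarrow> 'a) \<Rightarrow> bool" where
  "is_solution G I \<phi> \<longleftrightarrow> is_interval I \<and> 0 \<in> I \<and> loc_abs_cont_on I \<phi> \<and>
     (AE t in lebesgue. t \<in> I \<longrightarrow>
        (\<exists>v. (\<phi> has_vector_derivative v) (at t within I) \<and> v \<in> G (\<phi> t)))"

definition is_maximal_solution :: "('a::euclidean_space \<Rightarrow> 'a set) \<Rightarrow> real set \<Rightarrow> (real \<Rightarrow> 'a) \<Rightarrow> bool" where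
  "is_maximal_solution G I \<phi> \<longleftrightarrow> is_solution G I \<phi> \<and>
     \<not> (\<exists>J \<psi>. is_solution G J \<psi> \<and> I \<subset> J \<and> (\<forall>s\<in>I. \<psi> s = \<phi> s))"

definition max_sols :: "('a::euclidean_space \<Rightarrow> 'a set) \<Rightarrow> 'a \<Rightarrow> (real set \<times> (real \<Rightarrow> 'a)) set" where
  "max_sols G x = {(I, \<phi>). is_maximal_solution G I \<phi> \<and> \<phi> 0 = x}"

definition forward_complete :: "('a::euclidean_space \<Rightarrow> 'a set) \<Rightarrow> bool" where
  "forward_complete G \<longleftrightarrow> (\<forall>x. \<forall>(I, \<phi>) \<in> max_sols G x. \<not> bdd_above I)"

definition Rb :: "('a::euclidean_space \<Rightarrow> 'a set) \<Rightarrow> real \<Rightarrow> 'a \<Rightarrow> 'a set" where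
  "Rb G t x =
    (if 0 \<le> t then
       {\<phi> s | I \<phi> s. (I, \<phi>) \<in> max_sols G x \<and> s \<in> I \<inter> {0..t} \<and>
                      \<not> (\<exists>s'\<in>{0..t} \<inter> I. s' > s)}
     else
       {\<phi> s | I \<phi> s. (I, \<phi>) \<in> max_sols G x \<and> s \<in> I \<inter> {t..0} \<and>
                      \<not> (\<exists>s'\<in>{t..0} \<inter> I. s' < s)})"

definition inflate :: "('a::euclidean_space \<Rightarrow> 'a set) \<Rightarrow> ('a \<Rightarrow> real) \<Rightarrow> 'a \<Rightarrow> 'a set" where
  "inflate G eps x = {u + w | u w. u \<in> G x \<and> w \<in> cball 0 (eps x)}"

definition reverse :: "('a::euclidean_space \<Rightarrow> 'a set) \<Rightarrow> 'a \<Rightarrow> 'a set" where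
  "reverse G x = uminus ` G x"

end

theory Submission
  imports Defs
begin

text \<open>
  On the unit ball around \<open>x\<close> the velocities in \<open>F\<close> are bounded by some \<open>M\<close>,
  \<open>eps\<close> has a positive minimum \<open>m\<close>, and by continuity of \<open>F\<close> there is a \<open>\<rho>\<close> such that every
  velocity at \<open>p\<close> is \<open>m/2\<close>-close to one at \<open>q\<close> whenever \<open>|p - q| < \<rho>\<close>. Up to time
  \<open>T = 1/(2M)\<close> solutions from \<open>x\<close> stay in the ball of radius \<open>1/2\<close>. If a solution \<open>\<phi>\<close> reaches
  \<open>y = \<phi> t\<close>, then for \<open>|z - y| \<le> \<delta>\<close> the curve \<open>\<phi> s + (s/t) (z - y)\<close> moves less than \<open>\<delta>\<close> away from
  \<open>\<phi>\<close>, so its velocity \<open>\<phi>' s + (z - y)/t\<close> lies in the \<open>eps\<close>-inflation of \<open>F\<close> at the displaced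
  point: it solves the inflated inclusion and ends at \<open>z\<close>. The curve \<open>\<phi> s + ((t - s)/t) (z - x)\<close>,
  run backwards from \<open>y\<close>, reaches every \<open>z\<close> near \<open>x\<close> in the same way. Extending these solutions to
  maximal ones (Zorn's lemma) puts their endpoints into the reachable sets, and reflecting time
  identifies the backward reachable set with that of the reversed system.
\<close>

section \<open>Absolute continuity\<close>

definition nonoverlapping_intervals :: "real \<Rightarrow> real \<Rightarrow> nat \<Rightarrow> (nat \<Rightarrow> real) \<Rightarrow> (nat \<Rightarrow> real) \<Rightarrow> bool" where
  "nonoverlapping_intervals a b n l r \<longleftrightarrow>
     (\<forall>k<n. a \<le> l k \<and> l k \<le> r k \<and> r k \<le> b) \<and>
     (\<forall>i<n. \<forall>j<n. i \<noteq> j \<longrightarrow> {l i<..<r i} \<inter> {l j<..<r j} = {})"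

lemma abs_cont_on_iff:
  "abs_cont_on a b f \<longleftrightarrow> (\<forall>e>0. \<exists>d>0. \<forall>n l r. nonoverlapping_intervals a b n l r \<longrightarrow>
      (\<Sum>k<n. r k - l k) < d \<longrightarrow> (\<Sum>k<n. norm (f (r k) - f (l k))) < e)"
  unfolding abs_cont_on_def nonoverlapping_intervals_def by (simp only: imp_conjL)

lemma abs_cont_onI:
  assumes "\<And>e. e > 0 \<Longrightarrow> \<exists>d>0. \<forall>n l r. nonoverlapping_intervals a b n l r \<longrightarrow>
      (\<Sum>k<n. r k - l k) < d \<longrightarrow> (\<Sum>k<n. norm (f (r k) - f (l k))) < e"
  shows "abs_cont_on a b f"
  using assms unfolding abs_cont_on_iff by blast

lemma abs_cont_onD:
  assumes "abs_cont_on a b f" "e > 0"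
  obtains d where "d > 0" "\<And>n l r. nonoverlapping_intervals a b n l r \<Longrightarrow>
      (\<Sum>k<n. r k - l k) < d \<Longrightarrow> (\<Sum>k<n. norm (f (r k) - f (l k))) < e"
  using assms unfolding abs_cont_on_iff by meson

lemma nonoverlapping_intervals_mono:
  "nonoverlapping_intervals a' b' n l r \<Longrightarrow> a \<le> a' \<Longrightarrow> b' \<le> b \<Longrightarrow> nonoverlapping_intervals a b n l r"
  unfolding nonoverlapping_intervals_def by force

lemma nonoverlapping_intervals_translate:
  "nonoverlapping_intervals (a - c) (b - c) n l r \<Longrightarrow>
     nonoverlapping_intervals a b n (\<lambda>k. l k + c) (\<lambda>k. r k + c)"
  unfolding nonoverlapping_intervals_def Int_greaterThanLessThan greaterThanLessThan_empty_iff
  by (simp add: diff_le_eq le_diff_eq flip: min_add_distrib_left max_add_distrib_left)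

lemma nonoverlapping_intervals_reflect:
  "nonoverlapping_intervals (- b) (- a) n l r \<Longrightarrow>
     nonoverlapping_intervals a b n (\<lambda>k. - r k) (\<lambda>k. - l k)"
  unfolding nonoverlapping_intervals_def Int_greaterThanLessThan greaterThanLessThan_empty_iff
  by (simp add: le_minus_iff minus_le_iff max.commute min.commute flip: minus_max_eq_min minus_min_eq_max)

lemma nonoverlapping_intervals_empty:
  "nonoverlapping_intervals a b n l r \<Longrightarrow> b < a \<Longrightarrow> n = 0"
  unfolding nonoverlapping_intervals_def by (metis gr0I order.trans not_le)

lemma abs_cont_on_empty: "b < a \<Longrightarrow> abs_cont_on a b f"
  by (rule abs_cont_onI, rule exI[of _ 1]) (auto dest: nonoverlapping_intervals_empty)

lemma abs_cont_on_subinterval: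
  "abs_cont_on a b f \<Longrightarrow> a \<le> a' \<Longrightarrow> b' \<le> b \<Longrightarrow> abs_cont_on a' b' f"
proof (rule abs_cont_onI)
  fix e :: real assume "abs_cont_on a b f" "a \<le> a'" "b' \<le> b" "e > 0"
  then show "\<exists>d>0. \<forall>n l r. nonoverlapping_intervals a' b' n l r \<longrightarrow>
      (\<Sum>k<n. r k - l k) < d \<longrightarrow> (\<Sum>k<n. norm (f (r k) - f (l k))) < e"
    by (metis abs_cont_onD nonoverlapping_intervals_mono)
qed

lemma abs_cont_on_cong:
  assumes "abs_cont_on a b f" "\<And>s. s \<in> {a..b} \<Longrightarrow> f s = g s"
  shows "abs_cont_on a b g"
proof -
  have "(\<Sum>k<n. norm (g (r k) - g (l k))) = (\<Sum>k<n. norm (f (r k) - f (l k)))"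
    if "nonoverlapping_intervals a b n l r" for n l r
    using that assms(2) unfolding nonoverlapping_intervals_def by (intro sum.cong) auto
  with assms(1) show ?thesis
    unfolding abs_cont_on_iff by presburger
qed

lemma abs_cont_on_translate:
  assumes "abs_cont_on a b f"
  shows "abs_cont_on (a - c) (b - c) (\<lambda>s. f (s + c))"
proof (rule abs_cont_onI)
  fix e :: real assume "e > 0"
  then obtain d where "d > 0" and d: "\<And>n l r. nonoverlapping_intervals a b n l r \<Longrightarrow>
      (\<Sum>k<n. r k - l k) < d \<Longrightarrow> (\<Sum>k<n. norm (f (r k) - f (l k))) < e"
    using abs_cont_onD[OF assms] by blast
  show "\<exists>d>0. \<forall>n l r. nonoverlapping_intervals (a - c) (b - c) n l r \<longrightarrow>
      (\<Sum>k<n. r k - l k) < d \<longrightarrow> (\<Sum>k<n. norm (f (r k + c) - f (l k + c))) < e"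
    using \<open>d > 0\<close> d[OF nonoverlapping_intervals_translate] by auto
qed

lemma abs_cont_on_reflect:
  assumes "abs_cont_on a b f"
  shows "abs_cont_on (- b) (- a) (\<lambda>s. f (- s))"
proof (rule abs_cont_onI)
  fix e :: real assume "e > 0"
  then obtain d where "d > 0" and d: "\<And>n l r. nonoverlapping_intervals a b n l r \<Longrightarrow>
      (\<Sum>k<n. r k - l k) < d \<Longrightarrow> (\<Sum>k<n. norm (f (r k) - f (l k))) < e"
    using abs_cont_onD[OF assms] by blast
  show "\<exists>d>0. \<forall>n l r. nonoverlapping_intervals (- b) (- a) n l r \<longrightarrow>
      (\<Sum>k<n. r k - l k) < d \<longrightarrow> (\<Sum>k<n. norm (f (- r k) - f (- l k))) < e"
    using \<open>d > 0\<close> d[OF nonoverlapping_intervals_reflect] by (auto simp: norm_minus_commute)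
qed

lemma abs_cont_on_add:
  assumes f: "abs_cont_on a b f" and g: "abs_cont_on a b g"
  shows "abs_cont_on a b (\<lambda>s. f s + g s)"
proof (rule abs_cont_onI)
  fix e :: real assume "e > 0"
  then have "e/2 > 0" by simp
  obtain d1 where "d1 > 0" and d1: "\<And>n l r. nonoverlapping_intervals a b n l r \<Longrightarrow>
      (\<Sum>k<n. r k - l k) < d1 \<Longrightarrow> (\<Sum>k<n. norm (f (r k) - f (l k))) < e/2"
    using abs_cont_onD[OF f \<open>e/2 > 0\<close>] by blast
  obtain d2 where "d2 > 0" and d2: "\<And>n l r. nonoverlapping_intervals a b n l r \<Longrightarrow>
      (\<Sum>k<n. r k - l k) < d2 \<Longrightarrow> (\<Sum>k<n. norm (g (r k) - g (l k))) < e/2"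
    using abs_cont_onD[OF g \<open>e/2 > 0\<close>] by blast
  have "(\<Sum>k<n. norm (f (r k) + g (r k) - (f (l k) + g (l k)))) < e"
    if "nonoverlapping_intervals a b n l r" "(\<Sum>k<n. r k - l k) < min d1 d2" for n l r
  proof -
    have "(\<Sum>k<n. norm (f (r k) + g (r k) - (f (l k) + g (l k))))
        \<le> (\<Sum>k<n. norm (f (r k) - f (l k)) + norm (g (r k) - g (l k)))"
      by (intro sum_mono) (metis add_diff_add norm_triangle_ineq)
    also have "\<dots> < e/2 + e/2"
      unfolding sum.distrib using d1[OF that(1)] d2[OF that(1)] that(2) by simp
    finally show ?thesis by simp
  qed
  then show "\<exists>d>0. \<forall>n l r. nonoverlapping_intervals a b n l r \<longrightarrow> (\<Sum>k<n. r k - l k) < d \<longrightarrow>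
      (\<Sum>k<n. norm (f (r k) + g (r k) - (f (l k) + g (l k)))) < e"
    using \<open>d1 > 0\<close> \<open>d2 > 0\<close> by (intro exI[of _ "min d1 d2"]) auto
qed

lemma abs_cont_on_scaleR_const: "abs_cont_on a b (\<lambda>s. s *\<^sub>R w)"
proof (rule abs_cont_onI)
  fix e :: real assume "e > 0"
  have "(\<Sum>k<n. norm (r k *\<^sub>R w - l k *\<^sub>R w)) < e"
    if lr: "nonoverlapping_intervals a b n l r" "(\<Sum>k<n. r k - l k) < e / (norm w + 1)" for n l r
  proof -
    have lin: "norm (r k *\<^sub>R w - l k *\<^sub>R w) = norm w * (r k - l k)" if "k < n" for k
    proof -
      have "l k \<le> r k" using lr(1) that unfolding nonoverlapping_intervals_def by blast
      then show ?thesis by (simp flip: scaleR_diff_left)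
    qed
    have "(\<Sum>k<n. norm (r k *\<^sub>R w - l k *\<^sub>R w)) = norm w * (\<Sum>k<n. r k - l k)"
      unfolding sum_distrib_left using lin by (intro sum.cong) auto
    also have "\<dots> \<le> (norm w + 1) * (\<Sum>k<n. r k - l k)"
      using lr(1) unfolding nonoverlapping_intervals_def
      by (intro mult_right_mono sum_nonneg) auto
    also have "\<dots> < e"
      using lr(2) by (simp add: less_divide_eq add_nonneg_pos mult.commute)
    finally show ?thesis .
  qed
  then show "\<exists>d>0. \<forall>n l r. nonoverlapping_intervals a b n l r \<longrightarrow> (\<Sum>k<n. r k - l k) < d \<longrightarrow>
      (\<Sum>k<n. norm (r k *\<^sub>R w - l k *\<^sub>R w)) < e"
    using \<open>e > 0\<close> by (intro exI[of _ "e / (norm w + 1)"]) (simp add: add_nonneg_pos)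
qed

lemma abs_cont_on_imp_continuous_on:
  assumes "abs_cont_on a b f"
  shows "continuous_on {a..b} f"
  unfolding continuous_on_iff
proof (intro ballI allI impI)
  fix s e :: real assume s: "s \<in> {a..b}" and "e > 0"
  then obtain d where "d > 0" and d: "\<And>n l r. nonoverlapping_intervals a b n l r \<Longrightarrow>
      (\<Sum>k<n. r k - l k) < d \<Longrightarrow> (\<Sum>k<n. norm (f (r k) - f (l k))) < e"
    using abs_cont_onD[OF assms] by blast
  have "dist (f s') (f s) < e" if s': "s' \<in> {a..b}" "dist s' s < d" for s'
  proof -
    have "nonoverlapping_intervals a b 1 (\<lambda>_. min s s') (\<lambda>_. max s s')"
      using s s' unfolding nonoverlapping_intervals_def by auto
    moreover have "(\<Sum>k<(1::nat). max s s' - min s s') < d"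
      using s'(2) by (simp add: dist_real_def)
    ultimately have "norm (f (max s s') - f (min s s')) < e"
      using d by fastforce
    then show ?thesis
      by (cases "s \<le> s'") (simp_all add: dist_norm norm_minus_commute max_def min_def)
  qed
  then show "\<exists>d>0. \<forall>s'\<in>{a..b}. dist s' s < d \<longrightarrow> dist (f s') (f s) < e"
    using \<open>d > 0\<close> by blast
qed

section \<open>Mean value inequality for absolutely continuous functions\<close>

lemma tagged_partial_division_real_interval:
  fixes p :: "(real \<times> real set) set"
  assumes "p tagged_partial_division_of {a..b}" "(x, K) \<in> p"
  shows "K = {Inf K..Sup K}" "Inf K \<le> x" "x \<le> Sup K" "a \<le> Inf K" "Sup K \<le> b"
    and "measure lborel K = Sup K - Inf K"
proof -
  obtain u v where K: "K = cbox u v"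
    using tagged_partial_division_ofD(4)[OF assms] by blast
  have "x \<in> K" "K \<subseteq> {a..b}"
    using tagged_partial_division_ofD(2,3)[OF assms] by auto
  moreover from this K have "u \<le> v" "Inf K = u" "Sup K = v" by auto
  ultimately show "K = {Inf K..Sup K}" "Inf K \<le> x" "x \<le> Sup K" "a \<le> Inf K" "Sup K \<le> b"
      "measure lborel K = Sup K - Inf K"
    using K by auto
qed

lemma abs_cont_on_tagged_partial_division:
  assumes "abs_cont_on a b f" "e > 0"
  obtains d where "d > 0" "\<And>p. p tagged_partial_division_of {a..b} \<Longrightarrow> (\<Sum>(x,K)\<in>p. measure lborel K) < d \<Longrightarrow>
      (\<Sum>(x,K)\<in>p. norm (f (Sup K) - f (Inf K))) < e"
proof -
  obtain d where "d > 0" and d: "\<And>n l r. nonoverlapping_intervals a b n l r \<Longrightarrow>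
      (\<Sum>k<n. r k - l k) < d \<Longrightarrow> (\<Sum>k<n. norm (f (r k) - f (l k))) < e"
    using abs_cont_onD[OF assms] by blast
  have "(\<Sum>(x,K)\<in>p. norm (f (Sup K) - f (Inf K))) < e"
    if p: "p tagged_partial_division_of {a..b}" "(\<Sum>(x,K)\<in>p. measure lborel K) < d" for p
  proof -
    note bounds = tagged_partial_division_real_interval[OF p(1)]
    obtain h where h: "bij_betw h {..<card p} p"
      using ex_bij_betw_nat_finite tagged_partial_division_ofD(1)[OF p(1)] lessThan_atLeast0 by metis
    define l where "l k = Inf (snd (h k))" for k
    define r where "r k = Sup (snd (h k))" for k
    have hp: "(fst (h k), snd (h k)) \<in> p" if "k < card p" for k
      using bij_betw_apply[OF h] that by simp
    have "nonoverlapping_intervals a b (card p) l r"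
      unfolding nonoverlapping_intervals_def
    proof (intro conjI; intro allI impI)
      fix k assume "k < card p"
      then show "a \<le> l k \<and> l k \<le> r k \<and> r k \<le> b"
        using bounds[OF hp] unfolding l_def r_def by (meson order.trans)
    next
      fix i j assume ij: "i < card p" "j < card p" "i \<noteq> j"
      then have "(fst (h i), snd (h i)) \<noteq> (fst (h j), snd (h j))"
        using ij inj_onD[OF bij_betw_imp_inj_on[OF h]] by auto
      then have "interior (snd (h i)) \<inter> interior (snd (h j)) = {}"
        using tagged_partial_division_ofD(5)[OF p(1) hp hp] ij by blast
      then show "{l i<..<r i} \<inter> {l j<..<r j} = {}"
        using bounds(1)[OF hp] ij unfolding l_def r_def by (metis interior_atLeastAtMost_real)
    qed
    moreover have "(\<Sum>k<card p. r k - l k) = (\<Sum>(x,K)\<in>p. measure lborel K)"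
      using bounds(6)[OF hp] sum.reindex_bij_betw[OF h, of "\<lambda>(x,K). measure lborel K"]
      unfolding l_def r_def by (simp add: split_def)
    moreover have "(\<Sum>k<card p. norm (f (r k) - f (l k))) = (\<Sum>(x,K)\<in>p. norm (f (Sup K) - f (Inf K)))"
      using sum.reindex_bij_betw[OF h, of "\<lambda>(x,K). norm (f (Sup K) - f (Inf K))"]
      unfolding l_def r_def by (simp add: split_def)
    ultimately show ?thesis
      using d p(2) by metis
  qed
  with \<open>d > 0\<close> show thesis
    using that by blast
qed

lemma sum_content_tagged_partial_division_le_measure:
  assumes p: "p tagged_partial_division_of S"
    and T: "\<Union>(snd ` p) \<subseteq> T" "T \<in> lmeasurable"
  shows "(\<Sum>(x,K)\<in>p. measure lborel K) \<le> measure lebesgue T"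
proof -
  have div: "snd ` p division_of \<Union>(snd ` p)"
    by (rule partial_division_of_tagged_division[OF p])
  have "(\<Sum>(x,K)\<in>p. measure lborel K) = sum (measure lborel) (snd ` p)"
    by (rule sum.over_tagged_division_lemma[OF tagged_partial_division_of_Union_self[OF p]])
       (simp add: content_eq_0_interior)
  also have "\<dots> = sum (measure lebesgue) (snd ` p)"
  proof (rule sum.cong)
    fix K assume "K \<in> snd ` p"
    then obtain u v where "K = cbox u v"
      using division_ofD(4)[OF div] by blast
    then show "measure lborel K = measure lebesgue K"
      by (metis cbox_borel measure_completion sets_lborel)
  qed simp
  also have "\<dots> = measure lebesgue (\<Union>(snd ` p))"
    by (rule content_division[OF div])
  also have "\<dots> \<le> measure lebesgue T"
    using T lmeasurable_division[OF div] by (intro measure_mono_fmeasurable) auto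
  finally show ?thesis .
qed

lemma negligible_outer_open:
  assumes N: "negligible N" and "e > 0"
  obtains T where "open T" "N \<subseteq> T" "T \<in> lmeasurable" "measure lebesgue T < e"
proof -
  obtain T where T: "open T" "N \<subseteq> T" "T - N \<in> lmeasurable" "emeasure lebesgue (T - N) < ennreal e"
    using sets_lebesgue_outer_open[OF negligible_imp_sets[OF N] \<open>e > 0\<close>] by blast
  have "T \<in> lmeasurable"
    using T(2,3) N by (metis negligible_imp_measurable fmeasurable_Diff_D)
  moreover have "measure lebesgue T = measure lebesgue (T - N)"
    using T N by (metis fmeasurable_Diff_D measurable_Diff_null_set
        measure_Diff_null_set negligible_iff_measure negligible_iff_null_sets)
  moreover have "measure lebesgue (T - N) < e"
    using T(3,4) by (simp add: emeasure_eq_measure2 ennreal_less_iff)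
  ultimately show thesis
    using that T(1,2) by simp
qed

lemma sum_increments_tagged_partial_division_le:
  fixes f :: "real \<Rightarrow> 'a::real_normed_vector"
  assumes p: "p tagged_partial_division_of {a..b}"
    and lip: "\<And>x K s. (x, K) \<in> p \<Longrightarrow> s \<in> K \<Longrightarrow> norm (f s - f x) \<le> L * \<bar>s - x\<bar>"
  shows "(\<Sum>(x,K)\<in>p. norm (f (Sup K) - f (Inf K))) \<le> L * (\<Sum>(x,K)\<in>p. measure lborel K)"
proof -
  note bounds = tagged_partial_division_real_interval[OF p]
  have "norm (f (Sup K) - f (Inf K)) \<le> L * measure lborel K" if xK: "(x, K) \<in> p" for x K
  proof -
    have "Sup K \<in> K" "Inf K \<in> K"
      using bounds(1-3)[OF xK] by (metis atLeastAtMost_iff order.trans order_refl)+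
    then have "norm (f (Sup K) - f x) \<le> L * (Sup K - x)" "norm (f (Inf K) - f x) \<le> L * (x - Inf K)"
      using lip[OF xK] bounds(2,3)[OF xK] by (force simp: abs_minus_commute)+
    then have "norm (f (Sup K) - f (Inf K)) \<le> L * (Sup K - x) + L * (x - Inf K)"
      using norm_triangle_le_diff[of "f (Sup K) - f x" "f (Inf K) - f x"] by simp
    then show ?thesis
      unfolding bounds(6)[OF xK] by (simp add: algebra_simps)
  qed
  then show ?thesis
    by (auto simp: sum_distrib_left intro!: sum_mono)
qed

lemma tagged_division_fine_off_null_set:
  fixes a b :: real
  assumes N: "negligible N" and "d > 0" and \<rho>: "\<And>t. t \<in> {a..b} - N \<Longrightarrow> \<rho> t > 0"
  obtains p where "p tagged_division_of {a..b}" "\<And>x K. (x, K) \<in> p \<Longrightarrow> x \<notin> N \<Longrightarrow> K \<subseteq> ball x (\<rho> x)"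
    "(\<Sum>(x,K)\<in>{(x,K)\<in>p. x \<in> N}. measure lborel K) < d"
proof -
  obtain T where T: "open T" "N \<subseteq> T" "T \<in> lmeasurable" "measure lebesgue T < d"
    using negligible_outer_open[OF N \<open>d > 0\<close>] by blast
  \<comment> \<open>Tags outside \<open>N\<close> get the prescribed neighbourhood, tags in \<open>N\<close> are confined to \<open>T\<close>.\<close>
  define \<gamma> where "\<gamma> t = (if t \<in> {a..b} - N then ball t (\<rho> t) else UNIV) \<inter> (if t \<in> T then T else UNIV)" for t
  have "gauge \<gamma>"
    unfolding gauge_def
  proof (intro allI conjI)
    fix t
    show "t \<in> \<gamma> t"
      using \<rho>[of t] T(2) unfolding \<gamma>_def by auto
    show "open (\<gamma> t)"
      using T(1) unfolding \<gamma>_def by auto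
  qed
  then obtain p where p: "p tagged_division_of {a..b}" "\<gamma> fine p"
    by (rule fine_division_exists_real)
  have pp: "p tagged_partial_division_of {a..b}"
    using p(1) unfolding tagged_division_of_def by blast
  have "K \<subseteq> ball x (\<rho> x)" if xK: "(x, K) \<in> p" "x \<notin> N" for x K
  proof -
    have "x \<in> {a..b} - N"
      using tagged_partial_division_ofD(2,3)[OF pp xK(1)] xK(2) by auto
    then show ?thesis
      using fineD[OF p(2) xK(1)] unfolding \<gamma>_def by auto
  qed
  moreover have Bp: "{(x,K)\<in>p. x \<in> N} tagged_partial_division_of {a..b}"
    by (rule tagged_partial_division_subset[OF pp]) auto
  moreover have "\<Union>(snd ` {(x,K)\<in>p. x \<in> N}) \<subseteq> T"
    using fineD[OF p(2)] T(2) unfolding \<gamma>_def by fastforce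
  then have "(\<Sum>(x,K)\<in>{(x,K)\<in>p. x \<in> N}. measure lborel K) < d"
    using sum_content_tagged_partial_division_le_measure[OF Bp _ T(3)] T(4) by fastforce
  ultimately show thesis
    using that p(1) by blast
qed

lemma abs_cont_on_norm_diff_le_approx:
  fixes f :: "real \<Rightarrow> 'a::real_normed_vector"
  assumes ab: "a \<le> b" and ac: "abs_cont_on a b f" and N: "negligible N"
    and L: "L \<ge> 0" and e: "e > 0"
    and loc: "\<And>t. t \<in> {a..b} - N \<Longrightarrow>
       \<exists>\<rho>>0. \<forall>s\<in>{a..b}. \<bar>s - t\<bar> < \<rho> \<longrightarrow> norm (f s - f t) \<le> L * \<bar>s - t\<bar>"
  shows "norm (f b - f a) \<le> L * (b - a) + e"
proof -
  obtain d where "d > 0" and d: "\<And>p. p tagged_partial_division_of {a..b} \<Longrightarrow>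
      (\<Sum>(x,K)\<in>p. measure lborel K) < d \<Longrightarrow> (\<Sum>(x,K)\<in>p. norm (f (Sup K) - f (Inf K))) < e"
    using abs_cont_on_tagged_partial_division[OF ac e] by blast
  have "\<forall>t\<in>{a..b} - N. \<exists>\<rho>>0. \<forall>s\<in>{a..b}. \<bar>s - t\<bar> < \<rho> \<longrightarrow> norm (f s - f t) \<le> L * \<bar>s - t\<bar>"
    by (intro ballI loc)
  from bchoice[OF this] obtain \<rho> where \<rho>: "\<forall>t\<in>{a..b} - N. \<rho> t > 0 \<and>
      (\<forall>s\<in>{a..b}. \<bar>s - t\<bar> < \<rho> t \<longrightarrow> norm (f s - f t) \<le> L * \<bar>s - t\<bar>)"
    by blast
  then obtain p where p: "p tagged_division_of {a..b}" "\<And>x K. (x, K) \<in> p \<Longrightarrow> x \<notin> N \<Longrightarrow> K \<subseteq> ball x (\<rho> x)"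
      and small: "(\<Sum>(x,K)\<in>{(x,K)\<in>p. x \<in> N}. measure lborel K) < d"
    using tagged_division_fine_off_null_set[OF N \<open>d > 0\<close>, where a=a and b=b and \<rho>=\<rho>] by blast
  have pp: "p tagged_partial_division_of {a..b}"
    using p(1) unfolding tagged_division_of_def by blast
  define G where "G = {(x,K)\<in>p. x \<notin> N}"
  define B where "B = {(x,K)\<in>p. x \<in> N}"
  have GB: "p = G \<union> B" "G \<inter> B = {}" "finite G" "finite B"
    using tagged_partial_division_ofD(1)[OF pp] unfolding G_def B_def by (auto intro: rev_finite_subset)
  let ?inc = "\<lambda>(x,K). norm (f (Sup K) - f (Inf K))"
  have "G tagged_partial_division_of {a..b}"
    by (rule tagged_partial_division_subset[OF pp]) (auto simp: G_def)
  moreover have "norm (f s - f x) \<le> L * \<bar>s - x\<bar>" if xK: "(x, K) \<in> G" and s: "s \<in> K" for x K s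
  proof -
    have "x \<in> {a..b} - N" "s \<in> ball x (\<rho> x) \<inter> {a..b}"
      using xK s p(2) tagged_partial_division_ofD(2,3)[OF pp] unfolding G_def by blast+
    moreover from this have "\<bar>s - x\<bar> < \<rho> x"
      by (simp add: dist_real_def abs_minus_commute)
    ultimately show ?thesis
      using \<rho> by blast
  qed
  ultimately have "sum ?inc G \<le> L * (\<Sum>(x,K)\<in>G. measure lborel K)"
    by (rule sum_increments_tagged_partial_division_le)
  also have "\<dots> \<le> L * (\<Sum>(x,K)\<in>p. measure lborel K)"
    using GB L by (intro mult_left_mono sum_mono2) auto
  also have "\<dots> = L * (b - a)"
    using additive_content_tagged_division[of p a b] p(1) ab by simp
  finally have good: "sum ?inc G \<le> L * (b - a)" .
  have Bp: "B tagged_partial_division_of {a..b}"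
    by (rule tagged_partial_division_subset[OF pp]) (auto simp: B_def)
  have "(\<Sum>(x,K)\<in>B. measure lborel K) < d"
    using small unfolding B_def .
  then have bad: "sum ?inc B < e"
    by (rule d[OF Bp])
  have "norm (f b - f a) \<le> sum ?inc p"
    using additive_tagged_division_1[OF ab p(1), of f] norm_sum[of _ p]
    by (metis (mono_tags, lifting) case_prod_unfold norm_minus_commute sum.cong)
  also have "\<dots> = sum ?inc G + sum ?inc B"
    using GB by (simp add: sum.union_disjoint)
  finally show ?thesis
    using good bad by linarith
qed

lemma has_vector_derivative_imp_increment_le:
  fixes f :: "real \<Rightarrow> 'a::real_normed_vector"
  assumes "(f has_vector_derivative v) (at t within S)" "norm v \<le> M" "\<eta> > 0"
  shows "\<exists>\<rho>>0. \<forall>s\<in>S. \<bar>s - t\<bar> < \<rho> \<longrightarrow> norm (f s - f t) \<le> (M + \<eta>) * \<bar>s - t\<bar>"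
proof -
  have "(f has_derivative (\<lambda>h. h *\<^sub>R v)) (at t within S)"
    using assms(1) by (simp add: has_vector_derivative_def)
  then obtain \<rho> where "\<rho> > 0" and \<rho>: "\<forall>s\<in>S. norm (s - t) < \<rho> \<longrightarrow>
      norm (f s - f t - (s - t) *\<^sub>R v) \<le> \<eta> * norm (s - t)"
    using assms(3) unfolding has_derivative_within_alt by blast
  have "norm (f s - f t) \<le> (M + \<eta>) * \<bar>s - t\<bar>" if "s \<in> S" "\<bar>s - t\<bar> < \<rho>" for s
  proof -
    have "norm (f s - f t) \<le> norm ((s - t) *\<^sub>R v) + norm (f s - f t - (s - t) *\<^sub>R v)"
      by (metis add.commute diff_add_cancel norm_triangle_ineq)
    also have "\<dots> \<le> \<bar>s - t\<bar> * M + \<eta> * \<bar>s - t\<bar>"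
      using \<rho> that assms(2) by (intro add_mono) (auto intro: mult_left_mono)
    finally show ?thesis
      by (simp add: algebra_simps)
  qed
  with \<open>\<rho> > 0\<close> show ?thesis by blast
qed

lemma abs_cont_on_norm_diff_le:
  fixes f :: "real \<Rightarrow> 'a::real_normed_vector"
  assumes ab: "a \<le> b" and ac: "abs_cont_on a b f" and N: "negligible N" and M: "M \<ge> 0"
    and deriv: "\<And>t. t \<in> {a..b} - N \<Longrightarrow>
       \<exists>v. (f has_vector_derivative v) (at t within {a..b}) \<and> norm v \<le> M"
  shows "norm (f b - f a) \<le> M * (b - a)"
proof (rule field_le_epsilon)
  fix e :: real assume "e > 0"
  define \<eta> where "\<eta> = e / (2 * (b - a + 1))"
  have "\<eta> > 0" "\<eta> * (b - a) \<le> e / 2"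
    using \<open>e > 0\<close> ab by (auto simp: \<eta>_def field_simps)
  have "norm (f b - f a) \<le> (M + \<eta>) * (b - a) + e / 2"
  proof (rule abs_cont_on_norm_diff_le_approx[OF ab ac N])
    fix t assume "t \<in> {a..b} - N"
    then show "\<exists>\<rho>>0. \<forall>s\<in>{a..b}. \<bar>s - t\<bar> < \<rho> \<longrightarrow> norm (f s - f t) \<le> (M + \<eta>) * \<bar>s - t\<bar>"
      using deriv has_vector_derivative_imp_increment_le \<open>\<eta> > 0\<close> by blast
  qed (use M \<open>\<eta> > 0\<close> \<open>e > 0\<close> in auto)
  also have "\<dots> \<le> M * (b - a) + e"
    using \<open>\<eta> * (b - a) \<le> e / 2\<close> by (simp add: algebra_simps)
  finally show "norm (f b - f a) \<le> M * (b - a) + e" .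
qed

section \<open>Continuous set-valued maps\<close>

lemma usc_setmap_bounded_on_compact:
  fixes F :: "'a::topological_space \<Rightarrow> 'b::real_normed_vector set"
  assumes usc: "usc_setmap F" and cpt: "\<And>x. compact (F x)" and K: "compact K"
  obtains M where "M > 0" "\<And>p v. p \<in> K \<Longrightarrow> v \<in> F p \<Longrightarrow> norm v \<le> M"
proof -
  have "\<exists>U R. open U \<and> p \<in> U \<and> (\<forall>q\<in>U. F q \<subseteq> ball 0 R)" for p
  proof -
    obtain R where "F p \<subseteq> ball 0 R"
      using bounded_subset_ballD[OF compact_imp_bounded[OF cpt]] by blast
    then have "\<forall>\<^sub>F q in nhds p. F q \<subseteq> ball 0 R"
      using usc unfolding usc_setmap_def by blast
    then show ?thesis
      unfolding eventually_nhds by blast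
  qed
  then obtain U R where UR: "\<And>p. open (U p) \<and> p \<in> U p \<and> (\<forall>q\<in>U p. F q \<subseteq> ball 0 (R p))"
    by metis
  obtain C where C: "C \<subseteq> K" "finite C" "K \<subseteq> \<Union>(U ` C)"
    using compactE_image[OF K, of K U] UR by blast
  have "norm v \<le> 1 + (\<Sum>c\<in>C. \<bar>R c\<bar>)" if pv: "p \<in> K" "v \<in> F p" for p v
  proof -
    obtain c where c: "c \<in> C" "p \<in> U c"
      using C(3) pv(1) by blast
    then have "norm v < R c"
      using UR[of c] pv(2) by (force simp: dist_norm)
    also have "\<dots> \<le> (\<Sum>c\<in>C. \<bar>R c\<bar>)"
      using member_le_sum[OF c(1) _ C(2), of "\<lambda>c. \<bar>R c\<bar>"] by simp
    finally show ?thesis by simp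
  qed
  moreover have "1 + (\<Sum>c\<in>C. \<bar>R c\<bar>) > 0"
    by (simp add: add_pos_nonneg sum_nonneg)
  ultimately show thesis
    using that by blast
qed

lemma continuous_setmap_locally_close:
  fixes F :: "'a::metric_space \<Rightarrow> 'b::real_normed_vector set"
  assumes cont: "continuous_setmap F" and cpt: "compact (F p0)" and r: "r > 0"
  shows "\<exists>\<epsilon>>0. \<forall>p\<in>ball p0 \<epsilon>. \<forall>q\<in>ball p0 \<epsilon>. \<forall>v\<in>F p. \<exists>u\<in>F q. dist v u < r"
proof -
  obtain C where C: "C \<subseteq> F p0" "finite C" "F p0 \<subseteq> (\<Union>c\<in>C. ball c (r/4))"
    using compactE_image[OF cpt, of "F p0" "\<lambda>c. ball c (r/4)"] r by force
  define U where "U = (\<Union>a\<in>F p0. ball a (r/2))"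
  have "open U" "F p0 \<subseteq> U"
    unfolding U_def using r by force+
  then have "\<forall>\<^sub>F q in nhds p0. F q \<subseteq> U"
    using cont unfolding continuous_setmap_def usc_setmap_def by blast
  moreover have "\<forall>\<^sub>F q in nhds p0. \<forall>c\<in>C. F q \<inter> ball c (r/4) \<noteq> {}"
  proof (rule eventually_ball_finite[OF C(2)], rule ballI)
    fix c assume "c \<in> C"
    then have "F p0 \<inter> ball c (r/4) \<noteq> {}"
      using C(1) r by force
    then show "\<forall>\<^sub>F q in nhds p0. F q \<inter> ball c (r/4) \<noteq> {}"
      using cont unfolding continuous_setmap_def lsc_setmap_def by (meson open_ball)
  qed
  ultimately obtain W where W: "open W" "p0 \<in> W" "\<And>q. q \<in> W \<Longrightarrow> F q \<subseteq> U \<and> (\<forall>c\<in>C. F q \<inter> ball c (r/4) \<noteq> {})"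
    unfolding eventually_nhds eventually_conj_iff[symmetric] by blast
  obtain \<epsilon> where \<epsilon>: "\<epsilon> > 0" "ball p0 \<epsilon> \<subseteq> W"
    using W(1,2) open_contains_ball by blast
  have "\<exists>u\<in>F q. dist v u < r" if pqv: "p \<in> ball p0 \<epsilon>" "q \<in> ball p0 \<epsilon>" "v \<in> F p" for p q v
  proof -
    have "v \<in> U" using W(3)[of p] pqv(1,3) \<epsilon>(2) by blast
    then obtain a where a: "a \<in> F p0" "dist a v < r/2" unfolding U_def by auto
    then obtain c where c: "c \<in> C" "dist c a < r/4" using C(3) by auto
    have "F q \<inter> ball c (r/4) \<noteq> {}" using W(3)[of q] pqv(2) \<epsilon>(2) c(1) by blast
    then obtain u where u: "u \<in> F q" "dist c u < r/4" by auto
    have "dist v u \<le> dist v a + dist a c + dist c u"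
      by (metis dist_triangle add_right_mono order_trans)
    also have "\<dots> < r"
      using a c u by (simp add: dist_commute)
    finally show ?thesis
      using u(1) by blast
  qed
  with \<epsilon>(1) show ?thesis
    by blast
qed

lemma continuous_setmap_uniformly_close:
  fixes F :: "'a::metric_space \<Rightarrow> 'b::real_normed_vector set"
  assumes cont: "continuous_setmap F" and cpt: "\<And>x. compact (F x)" and K: "compact K" and r: "r > 0"
  obtains \<rho> where "\<rho> > 0" "\<And>p q v. p \<in> K \<Longrightarrow> dist p q < \<rho> \<Longrightarrow> v \<in> F p \<Longrightarrow> \<exists>u\<in>F q. dist v u < r"
proof -
  have "\<forall>p0. \<exists>\<epsilon>. \<epsilon> > 0 \<and> (\<forall>p\<in>ball p0 \<epsilon>. \<forall>q\<in>ball p0 \<epsilon>. \<forall>v\<in>F p. \<exists>u\<in>F q. dist v u < r)"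
    using continuous_setmap_locally_close[OF cont cpt r] by blast
  then obtain \<epsilon> where \<epsilon>: "\<And>p0. \<epsilon> p0 > 0"
    "\<And>p0 p q v. p \<in> ball p0 (\<epsilon> p0) \<Longrightarrow> q \<in> ball p0 (\<epsilon> p0) \<Longrightarrow> v \<in> F p \<Longrightarrow> \<exists>u\<in>F q. dist v u < r"
    by metis
  have cover: "K \<subseteq> \<Union>((\<lambda>p0. ball p0 (\<epsilon> p0)) ` K)"
    using \<epsilon>(1) by force
  have "\<And>G. G \<in> (\<lambda>p0. ball p0 (\<epsilon> p0)) ` K \<Longrightarrow> open G"
    by auto
  then obtain \<rho> where \<rho>: "\<rho> > 0" "\<And>p. p \<in> K \<Longrightarrow> \<exists>G \<in> (\<lambda>p0. ball p0 (\<epsilon> p0)) ` K. ball p \<rho> \<subseteq> G"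
    using Heine_Borel_lemma[OF K cover] by blast
  have "\<exists>u\<in>F q. dist v u < r" if pqv: "p \<in> K" "dist p q < \<rho>" "v \<in> F p" for p q v
  proof -
    obtain p0 where "ball p \<rho> \<subseteq> ball p0 (\<epsilon> p0)"
      using \<rho>(2)[OF pqv(1)] by blast
    moreover have "p \<in> ball p \<rho>" "q \<in> ball p \<rho>"
      using \<rho>(1) pqv(2) by auto
    ultimately show ?thesis
      using \<epsilon>(2) pqv(3) by blast
  qed
  with \<rho>(1) show thesis
    using that by blast
qed

lemma inflation_margin_on_compact:
  fixes F :: "'a::metric_space \<Rightarrow> 'b::real_normed_vector set"
  assumes cont: "continuous_setmap F" and cpt: "\<And>x. compact (F x)" and K: "compact K"
    and eps: "continuous_on K eps" "\<And>z. z \<in> K \<Longrightarrow> eps z > 0"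
  obtains \<rho> \<mu> where "\<rho> > 0" "\<mu> > 0"
    "\<And>p q v w. p \<in> K \<Longrightarrow> q \<in> K \<Longrightarrow> dist p q < \<rho> \<Longrightarrow> v \<in> F p \<Longrightarrow> norm w \<le> \<mu> \<Longrightarrow>
       \<exists>u\<in>F q. norm (v + w - u) \<le> eps q"
proof (cases "K = {}")
  case False
  obtain m where m: "m > 0" "\<And>z. z \<in> K \<Longrightarrow> m \<le> eps z"
    using continuous_attains_inf[OF K False eps(1)] eps(2) by metis
  obtain \<rho> where "\<rho> > 0" and \<rho>: "\<And>p q v. p \<in> K \<Longrightarrow> dist p q < \<rho> \<Longrightarrow> v \<in> F p \<Longrightarrow> \<exists>u\<in>F q. dist v u < m/2"
    using continuous_setmap_uniformly_close[OF cont cpt K] m(1) by (metis half_gt_zero)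
  have "\<exists>u\<in>F q. norm (v + w - u) \<le> eps q"
    if pqvw: "p \<in> K" "q \<in> K" "dist p q < \<rho>" "v \<in> F p" "norm w \<le> m/2" for p q v w
  proof -
    obtain u where u: "u \<in> F q" "dist v u < m/2"
      using \<rho> pqvw(1,3,4) by blast
    have "norm (v + w - u) \<le> norm (v - u) + norm w"
      by (metis add.commute add_diff_eq diff_add_eq norm_triangle_ineq)
    also have "\<dots> \<le> eps q"
      using u(2) pqvw(5) m(2)[OF pqvw(2)] by (simp add: dist_norm)
    finally show ?thesis
      using u(1) by blast
  qed
  with \<open>\<rho> > 0\<close> m(1) show thesis
    using that[of \<rho> "m/2"] by simp
qed (use that[of 1 1] in simp)

lemma is_solution_derivativeE:
  assumes "is_solution G I \<phi>"
  obtains N where "negligible N"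
    "\<And>t. t \<in> I - N \<Longrightarrow> \<exists>v. (\<phi> has_vector_derivative v) (at t within I) \<and> v \<in> G (\<phi> t)"
proof -
  have "AE t in lebesgue. t \<in> I \<longrightarrow> (\<exists>v. (\<phi> has_vector_derivative v) (at t within I) \<and> v \<in> G (\<phi> t))"
    using assms unfolding is_solution_def by (elim conjE)
  then obtain N where "N \<in> null_sets lebesgue" and N: "{t \<in> space lebesgue.
      \<not> (t \<in> I \<longrightarrow> (\<exists>v. (\<phi> has_vector_derivative v) (at t within I) \<and> v \<in> G (\<phi> t)))} \<subseteq> N"
    unfolding eventually_ae_filter by (elim bexE) (rule that)
  show thesis
  proof (rule that)
    show "negligible N"
      using \<open>N \<in> null_sets lebesgue\<close> by (simp add: negligible_iff_null_sets)
    fix t assume "t \<in> I - N"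
    then show "\<exists>v. (\<phi> has_vector_derivative v) (at t within I) \<and> v \<in> G (\<phi> t)"
      using N by auto
  qed
qed

lemma is_solutionI:
  assumes "is_interval I" "0 \<in> I" "loc_abs_cont_on I \<phi>" "negligible N"
    and "\<And>t. t \<in> I - N \<Longrightarrow> \<exists>v. (\<phi> has_vector_derivative v) (at t within I) \<and> v \<in> G (\<phi> t)"
  shows "is_solution G I \<phi>"
proof -
  have "AE t in lebesgue. t \<in> I \<longrightarrow> (\<exists>v. (\<phi> has_vector_derivative v) (at t within I) \<and> v \<in> G (\<phi> t))"
    by (rule AE_I'[of N]) (use assms(4,5) negligible_iff_null_sets in auto)
  with assms(1-3) show ?thesis
    unfolding is_solution_def by (intro conjI)
qed

lemma is_solutionD:
  assumes "is_solution G I \<phi>"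
  shows "is_interval I" "0 \<in> I" "loc_abs_cont_on I \<phi>"
  using assms by (simp_all add: is_solution_def)

lemma solution_abs_cont_on:
  "is_solution G I \<phi> \<Longrightarrow> {a..b} \<subseteq> I \<Longrightarrow> abs_cont_on a b \<phi>"
  using is_solutionD(3) unfolding loc_abs_cont_on_def by blast

lemma loc_abs_cont_on_atLeastAtMost:
  assumes "abs_cont_on a b f"
  shows "loc_abs_cont_on {a..b} f"
  unfolding loc_abs_cont_on_def
proof (intro allI impI)
  fix a' b' assume "{a'..b'} \<subseteq> {a..b}"
  then show "abs_cont_on a' b' f"
    using assms by (cases "b' < a'") (auto intro: abs_cont_on_empty abs_cont_on_subinterval)
qed

lemma solution_norm_diff_le:
  fixes \<phi> :: "real \<Rightarrow> 'a::euclidean_space"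
  assumes sol: "is_solution G I \<phi>" and sub: "{a..b} \<subseteq> I" and ab: "a \<le> b" and M: "M \<ge> 0"
    and N': "negligible N'" and bound: "\<And>t v. t \<in> {a..b} - N' \<Longrightarrow> v \<in> G (\<phi> t) \<Longrightarrow> norm v \<le> M"
  shows "norm (\<phi> b - \<phi> a) \<le> M * (b - a)"
proof -
  obtain N where N: "negligible N"
    "\<And>t. t \<in> I - N \<Longrightarrow> \<exists>v. (\<phi> has_vector_derivative v) (at t within I) \<and> v \<in> G (\<phi> t)"
    using is_solution_derivativeE[OF sol] by blast
  from solution_abs_cont_on[OF sol sub] show ?thesis
  proof (rule abs_cont_on_norm_diff_le[OF ab _ negligible_Un[OF N(1) N'] M])
    fix t assume t: "t \<in> {a..b} - (N \<union> N')"
    then obtain v where "(\<phi> has_vector_derivative v) (at t within I)" "v \<in> G (\<phi> t)"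
      using N(2) sub by blast
    then show "\<exists>v. (\<phi> has_vector_derivative v) (at t within {a..b}) \<and> norm v \<le> M"
      using has_vector_derivative_within_subset[OF _ sub] bound t by blast
  qed
qed

lemma solution_displacement_le:
  fixes \<phi> :: "real \<Rightarrow> 'a::euclidean_space"
  assumes sol: "is_solution G I \<phi>" and sub: "{0..T} \<subseteq> I" and M: "M \<ge> 0" "M * T < 1"
    and bound: "\<And>p v. p \<in> cball (\<phi> 0) 1 \<Longrightarrow> v \<in> G p \<Longrightarrow> norm v \<le> M"
    and s: "s \<in> {0..T}"
  shows "norm (\<phi> s - \<phi> 0) \<le> M * s"
proof -
  have inside: "norm (\<phi> s - \<phi> 0) \<le> M * s"
    if s: "s \<in> {0..T}" and N': "negligible N'"
      and near: "\<And>r. r \<in> {0..s} - N' \<Longrightarrow> dist (\<phi> r) (\<phi> 0) < 1" for s N'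
  proof -
    have "norm (\<phi> s - \<phi> 0) \<le> M * (s - 0)"
    proof (rule solution_norm_diff_le[OF sol _ _ M(1) N'])
      show "{0..s} \<subseteq> I" "0 \<le> s"
        using s sub by auto
      fix t v assume t: "t \<in> {0..s} - N'" and "v \<in> G (\<phi> t)"
      moreover have "\<phi> t \<in> cball (\<phi> 0) 1"
        using near[OF t] by (simp add: dist_commute)
      ultimately show "norm v \<le> M"
        using bound by blast
    qed
    then show ?thesis by simp
  qed
  define A where "A = {r \<in> {0..T}. 1 \<le> dist (\<phi> r) (\<phi> 0)}"
  have "A = {}"
  proof (rule ccontr)
    assume "A \<noteq> {}"
    have "continuous_on {0..T} \<phi>"
      by (rule abs_cont_on_imp_continuous_on[OF solution_abs_cont_on[OF sol sub]])
    then have "closed ({0..T} \<inter> (\<lambda>r. dist (\<phi> r) (\<phi> 0)) -` {1..})"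
      by (intro continuous_closed_preimage continuous_intros) auto
    moreover have "A = {0..T} \<inter> (\<lambda>r. dist (\<phi> r) (\<phi> 0)) -` {1..}"
      unfolding A_def by auto
    moreover have "bdd_below A"
      unfolding A_def by (rule bdd_belowI[of _ 0]) auto
    ultimately have exit: "Inf A \<in> A"
      using closed_contains_Inf[OF \<open>A \<noteq> {}\<close>] by auto
    \<comment> \<open>Up to the first exit time \<open>Inf A\<close> the solution is in the unit ball, so it cannot reach its boundary.\<close>
    have "dist (\<phi> r) (\<phi> 0) < 1" if "r \<in> {0..Inf A} - {Inf A}" for r
      using that exit cInf_lower[OF _ \<open>bdd_below A\<close>, of r] unfolding A_def by force
    then have "norm (\<phi> (Inf A) - \<phi> 0) \<le> M * Inf A"
      using inside exit unfolding A_def by blast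
    also have "\<dots> \<le> M * T"
      using exit M(1) unfolding A_def by (auto intro: mult_left_mono)
    finally show False
      using exit M(2) unfolding A_def by (simp add: dist_norm)
  qed
  then have "dist (\<phi> r) (\<phi> 0) < 1" if "r \<in> {0..s} - {}" for r
    using that s unfolding A_def by fastforce
  then show ?thesis
    by (rule inside[OF s negligible_empty])
qed

lemma solution_add_drift:
  fixes \<phi> :: "real \<Rightarrow> 'a::euclidean_space"
  assumes sol: "is_solution G I \<phi>" and sub: "{a..b} \<subseteq> I" and c: "a \<le> c" "c \<le> b"
    and margin: "\<And>s v. s \<in> {a..b} \<Longrightarrow> v \<in> G (\<phi> s) \<Longrightarrow>
        \<exists>u\<in>H (\<phi> s + (s - c) *\<^sub>R w). norm (v + w - u) \<le> \<epsilon> (\<phi> s + (s - c) *\<^sub>R w)"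
  shows "is_solution (inflate H \<epsilon>) {a - c..b - c} (\<lambda>r. \<phi> (r + c) + r *\<^sub>R w)"
proof -
  let ?J = "{a - c..b - c}" and ?\<psi> = "\<lambda>r. \<phi> (r + c) + r *\<^sub>R w"
  obtain N where N: "negligible N"
    "\<And>t. t \<in> I - N \<Longrightarrow> \<exists>v. (\<phi> has_vector_derivative v) (at t within I) \<and> v \<in> G (\<phi> t)"
    using is_solution_derivativeE[OF sol] by blast
  have deriv: "\<exists>v. (?\<psi> has_vector_derivative v) (at r within ?J) \<and> v \<in> inflate H \<epsilon> (?\<psi> r)"
    if r: "r \<in> ?J - (+) (- c) ` N" for r
  proof -
    have rc: "r + c \<in> {a..b}" "r + c \<notin> N"
      using r by (auto simp: image_iff algebra_simps)
    then obtain v where v: "(\<phi> has_vector_derivative v) (at (r + c) within I)" "v \<in> G (\<phi> (r + c))"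
      using N(2) sub by blast
    have "((\<lambda>r. r + c) has_vector_derivative 1) (at r within ?J)"
      by (auto intro!: derivative_eq_intros)
    moreover have "(\<phi> has_vector_derivative v) (at (r + c) within (\<lambda>r. r + c) ` ?J)"
      by (rule has_vector_derivative_within_subset[OF v(1)]) (use sub in auto)
    ultimately have "((\<lambda>r. \<phi> (r + c)) has_vector_derivative v) (at r within ?J)"
      using vector_diff_chain_within by (fastforce simp: o_def)
    then have "(?\<psi> has_vector_derivative v + w) (at r within ?J)"
      by (auto intro!: derivative_eq_intros)
    moreover obtain u where u: "u \<in> H (?\<psi> r)" "norm (v + w - u) \<le> \<epsilon> (?\<psi> r)"
      using margin[OF rc(1) v(2)] by auto
    have "v + w = u + (v + w - u)" "v + w - u \<in> cball 0 (\<epsilon> (?\<psi> r))"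
      using u(2) by (simp_all add: dist_norm norm_minus_commute)
    then have "v + w \<in> inflate H \<epsilon> (?\<psi> r)"
      unfolding inflate_def using u(1) by blast
    ultimately show ?thesis by blast
  qed
  show ?thesis
  proof (rule is_solutionI[OF _ _ _ negligible_translation[OF N(1)] deriv])
    show "is_interval ?J"
      unfolding is_interval_1 by auto
    show "0 \<in> ?J"
      using c by auto
    show "loc_abs_cont_on ?J ?\<psi>"
      by (intro loc_abs_cont_on_atLeastAtMost abs_cont_on_add abs_cont_on_scaleR_const
          abs_cont_on_translate solution_abs_cont_on[OF sol sub])
  qed
qed

section \<open>Maximal solutions\<close>

lemma is_interval_rat_bracket:
  fixes I :: "real set"
  assumes "is_interval I" "t \<in> I" "t \<noteq> Inf I" "t \<noteq> Sup I"
  obtains q1 q2 where "q1 \<in> \<rat>" "q2 \<in> \<rat>" "q1 \<in> I" "q2 \<in> I" "q1 < t" "t < q2"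
proof -
  have "\<not> (\<forall>s\<in>I. t \<le> s)"
    using assms(2,3) cInf_eq_minimum[of t I] by blast
  then obtain t1 where t1: "t1 \<in> I" "t1 < t"
    by (auto simp: not_le)
  have "\<not> (\<forall>s\<in>I. s \<le> t)"
    using assms(2,4) cSup_eq_maximum[of t I] by blast
  then obtain t2 where t2: "t2 \<in> I" "t < t2"
    by (auto simp: not_le)
  obtain q1 where q1: "q1 \<in> \<rat>" "t1 < q1" "q1 < t"
    using Rats_dense_in_real[OF t1(2)] by blast
  obtain q2 where q2: "q2 \<in> \<rat>" "t < q2" "q2 < t2"
    using Rats_dense_in_real[OF t2(2)] by blast
  have "q1 \<in> I" "q2 \<in> I"
    using assms(1,2) t1 t2 q1 q2 unfolding is_interval_1 by (meson less_imp_le)+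
  with q1 q2 show thesis
    using that by blast
qed

lemma has_vector_derivative_transfer:
  assumes "(\<psi> has_vector_derivative v) (at t within J)" "t \<in> {c<..<d}" "{c<..<d} \<subseteq> J"
    and "\<And>s. s \<in> {c<..<d} \<Longrightarrow> \<psi> s = \<phi> s"
  shows "(\<phi> has_vector_derivative v) (at t within I)"
proof -
  have "(\<psi> has_vector_derivative v) (at t)"
    using has_vector_derivative_within_subset[OF assms(1,3)] at_within_open[OF assms(2)] by simp
  then have "(\<phi> has_vector_derivative v) (at t)"
    by (rule has_vector_derivative_transform_within_open[OF _ _ assms(2,4)]) simp
  then show ?thesis
    by (rule has_vector_derivative_at_within)
qed

lemma loc_abs_cont_on_if_locally:
  fixes \<phi> :: "real \<Rightarrow> 'a::euclidean_space"
  assumes local: "\<And>a b. a \<in> I \<Longrightarrow> b \<in> I \<Longrightarrow>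
      \<exists>J \<psi>. is_solution G J \<psi> \<and> {a..b} \<subseteq> J \<and> (\<forall>s\<in>J. \<psi> s = \<phi> s)"
  shows "loc_abs_cont_on I \<phi>"
  unfolding loc_abs_cont_on_def
proof (intro allI impI)
  fix a b assume ab: "{a..b} \<subseteq> I"
  show "abs_cont_on a b \<phi>"
  proof (cases "b < a")
    case False
    then have "a \<in> I" "b \<in> I"
      using ab by auto
    then obtain J \<psi> where J: "is_solution G J \<psi>" "{a..b} \<subseteq> J" "\<forall>s\<in>J. \<psi> s = \<phi> s"
      using local by blast
    show ?thesis
      by (rule abs_cont_on_cong[OF solution_abs_cont_on[OF J(1,2)]]) (use J(2,3) in auto)
  qed (rule abs_cont_on_empty)
qed

lemma solution_derivative_if_locally:
  fixes \<phi> :: "real \<Rightarrow> 'a::euclidean_space"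
  assumes I: "is_interval I"
    and local: "\<And>a b. a \<in> I \<Longrightarrow> b \<in> I \<Longrightarrow>
      \<exists>J \<psi>. is_solution G J \<psi> \<and> {a..b} \<subseteq> J \<and> (\<forall>s\<in>J. \<psi> s = \<phi> s)"
  obtains N where "negligible N"
    "\<And>t. t \<in> I - N \<Longrightarrow> \<exists>v. (\<phi> has_vector_derivative v) (at t within I) \<and> v \<in> G (\<phi> t)"
proof -
  \<comment> \<open>A countable family of local solutions, indexed by rational subintervals, covers all of \<open>I\<close>
    except its endpoints; the union of their exceptional null sets is still null.\<close>
  define Q where "Q = {q :: real \<times> real. fst q \<in> \<rat> \<and> snd q \<in> \<rat> \<and> fst q \<in> I \<and> snd q \<in> I}"
  have "countable Q"
    by (rule countable_subset[of _ "\<rat> \<times> \<rat>"]) (auto simp: Q_def intro: countable_SIGMA countable_rat)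
  have "\<forall>q\<in>Q. \<exists>J \<psi> N. {fst q..snd q} \<subseteq> J \<and> (\<forall>s\<in>J. \<psi> s = \<phi> s) \<and> negligible N \<and>
      (\<forall>t\<in>J - N. \<exists>v. (\<psi> has_vector_derivative v) (at t within J) \<and> v \<in> G (\<psi> t))"
  proof
    fix q assume "q \<in> Q"
    then obtain J \<psi> where J: "is_solution G J \<psi>" "{fst q..snd q} \<subseteq> J" "\<forall>s\<in>J. \<psi> s = \<phi> s"
      using local unfolding Q_def by blast
    moreover obtain N where "negligible N"
      "\<And>t. t \<in> J - N \<Longrightarrow> \<exists>v. (\<psi> has_vector_derivative v) (at t within J) \<and> v \<in> G (\<psi> t)"
      using is_solution_derivativeE[OF J(1)] by blast
    ultimately show "\<exists>J \<psi> N. {fst q..snd q} \<subseteq> J \<and> (\<forall>s\<in>J. \<psi> s = \<phi> s) \<and> negligible N \<and>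
        (\<forall>t\<in>J - N. \<exists>v. (\<psi> has_vector_derivative v) (at t within J) \<and> v \<in> G (\<psi> t))"
      by blast
  qed
  then obtain J \<psi> N where JN: "\<And>q. q \<in> Q \<Longrightarrow> {fst q..snd q} \<subseteq> J q \<and> (\<forall>s\<in>J q. \<psi> q s = \<phi> s) \<and>
      negligible (N q) \<and> (\<forall>t\<in>J q - N q. \<exists>v. (\<psi> q has_vector_derivative v) (at t within J q) \<and> v \<in> G (\<psi> q t))"
    by metis
  have "negligible ({Inf I, Sup I} \<union> (\<Union>q\<in>Q. N q))"
    using JN \<open>countable Q\<close> by (intro negligible_Un negligible_countable_Union) (auto intro: negligible_finite)
  moreover have "\<exists>v. (\<phi> has_vector_derivative v) (at t within I) \<and> v \<in> G (\<phi> t)"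
    if t: "t \<in> I - ({Inf I, Sup I} \<union> (\<Union>q\<in>Q. N q))" for t
  proof -
    obtain q1 q2 where q: "q1 \<in> \<rat>" "q2 \<in> \<rat>" "q1 \<in> I" "q2 \<in> I" "q1 < t" "t < q2"
      using is_interval_rat_bracket[OF I(1), of t] t by blast
    then have "(q1, q2) \<in> Q"
      unfolding Q_def by simp
    note Jq = JN[OF this]
    have tJ: "t \<in> J (q1, q2) - N (q1, q2)"
      using Jq q t \<open>(q1, q2) \<in> Q\<close> by auto
    then obtain v where v: "(\<psi> (q1, q2) has_vector_derivative v) (at t within J (q1, q2))"
        "v \<in> G (\<psi> (q1, q2) t)"
      using Jq by blast
    have sub: "{q1<..<q2} \<subseteq> J (q1, q2)"
      using Jq by fastforce
    have "(\<phi> has_vector_derivative v) (at t within I)"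
      by (rule has_vector_derivative_transfer[OF v(1) _ sub]) (use Jq sub q in auto)
    moreover have "\<psi> (q1, q2) t = \<phi> t"
      using Jq tJ by blast
    ultimately show ?thesis
      using v(2) by auto
  qed
  ultimately show thesis
    using that by blast
qed

lemma is_solution_if_locally:
  fixes \<phi> :: "real \<Rightarrow> 'a::euclidean_space"
  assumes I: "is_interval I" "0 \<in> I"
    and local: "\<And>a b. a \<in> I \<Longrightarrow> b \<in> I \<Longrightarrow>
      \<exists>J \<psi>. is_solution G J \<psi> \<and> {a..b} \<subseteq> J \<and> (\<forall>s\<in>J. \<psi> s = \<phi> s)"
  shows "is_solution G I \<phi>"
proof -
  have "loc_abs_cont_on I \<phi>"
    using local by (rule loc_abs_cont_on_if_locally)
  moreover obtain N where "negligible N"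
    "\<And>t. t \<in> I - N \<Longrightarrow> \<exists>v. (\<phi> has_vector_derivative v) (at t within I) \<and> v \<in> G (\<phi> t)"
    using solution_derivative_if_locally[OF I(1)] local by blast
  ultimately show ?thesis
    by (rule is_solutionI[OF I])
qed

definition graph :: "real set \<Rightarrow> (real \<Rightarrow> 'a) \<Rightarrow> (real \<times> 'a) set" where
  "graph I \<phi> = (\<lambda>s. (s, \<phi> s)) ` I"

lemma graph_subset_iff: "graph I \<phi> \<subseteq> graph J \<psi> \<longleftrightarrow> I \<subseteq> J \<and> (\<forall>s\<in>I. \<psi> s = \<phi> s)"
  unfolding graph_def by auto

lemma fst_graph [simp]: "fst ` graph I \<phi> = I"
  unfolding graph_def by force

lemma Union_chain_of_graphs:
  assumes chain: "\<And>X Y. X \<in> C \<Longrightarrow> Y \<in> C \<Longrightarrow> X \<subseteq> Y \<or> Y \<subseteq> X"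
    and graphs: "\<And>X. X \<in> C \<Longrightarrow> \<exists>I \<phi>. X = graph I \<phi>"
  obtains \<phi> where "\<Union>C = graph (fst ` \<Union>C) \<phi>"
proof -
  define \<phi> where "\<phi> s = (SOME y. (s, y) \<in> \<Union>C)" for s
  have "\<phi> s = y" if sy: "(s, y) \<in> \<Union>C" for s y
  proof -
    have "(s, \<phi> s) \<in> \<Union>C"
      unfolding \<phi>_def using sy by (rule someI)
    with sy obtain Z where "Z \<in> C" "(s, \<phi> s) \<in> Z" "(s, y) \<in> Z"
      using chain by blast
    moreover from graphs[OF \<open>Z \<in> C\<close>] obtain J \<psi> where "Z = graph J \<psi>"
      by (elim exE)
    ultimately show ?thesis
      unfolding graph_def by auto
  qed
  then have "\<Union>C = graph (fst ` \<Union>C) \<phi>"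
    unfolding graph_def by force
  then show thesis
    by (rule that)
qed

lemma chain_of_solution_graphs_Union:
  fixes G :: "'a::euclidean_space \<Rightarrow> 'a set"
  assumes C: "C \<noteq> {}" "\<And>X Y. X \<in> C \<Longrightarrow> Y \<in> C \<Longrightarrow> X \<subseteq> Y \<or> Y \<subseteq> X"
    and sols: "\<And>X. X \<in> C \<Longrightarrow> \<exists>I \<phi>. X = graph I \<phi> \<and> is_solution G I \<phi>"
  shows "\<exists>I \<phi>. \<Union>C = graph I \<phi> \<and> is_solution G I \<phi>"
proof -
  define I where "I = fst ` \<Union>C"
  have "\<And>X. X \<in> C \<Longrightarrow> \<exists>I \<phi>. X = graph I \<phi>"
    using sols by blast
  with C(2) obtain \<phi> where graph: "\<Union>C = graph I \<phi>"
    unfolding I_def by (rule Union_chain_of_graphs)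
  have common: "\<exists>Z\<in>C. p \<in> Z \<and> q \<in> Z" if "p \<in> \<Union>C" "q \<in> \<Union>C" for p q
    using that C(2) by blast
  have sub: "J \<subseteq> I \<and> (\<forall>s\<in>J. \<phi> s = \<psi> s)" if "graph J \<psi> \<in> C" for J \<psi>
    using that graph graph_subset_iff[of J \<psi> I \<phi>] by blast
  have local: "\<exists>J \<psi>. is_solution G J \<psi> \<and> {a..b} \<subseteq> J \<and> J \<subseteq> I \<and> (\<forall>s\<in>J. \<psi> s = \<phi> s)"
    if ab: "a \<in> I" "b \<in> I" for a b
  proof -
    obtain p q where "p \<in> \<Union>C" "q \<in> \<Union>C" "a = fst p" "b = fst q"
      using ab unfolding I_def by blast
    moreover from this obtain Z where "Z \<in> C" "p \<in> Z" "q \<in> Z"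
      using common by blast
    ultimately have "Z \<in> C" "a \<in> fst ` Z" "b \<in> fst ` Z"
      by auto
    moreover obtain J \<psi> where "Z = graph J \<psi>" "is_solution G J \<psi>"
      using sols[OF \<open>Z \<in> C\<close>] by (elim exE conjE)
    moreover have "{a..b} \<subseteq> J" if "a \<in> J" "b \<in> J"
      using interval_subset_is_interval[OF is_solutionD(1)[OF \<open>is_solution G J \<psi>\<close>], of a b] that
      by (simp add: cbox_interval)
    moreover have "J \<subseteq> I" "\<forall>s\<in>J. \<psi> s = \<phi> s"
      using sub[of J \<psi>] calculation by auto
    ultimately show ?thesis
      by auto
  qed
  have "is_interval I"
    unfolding is_interval_1
  proof (intro ballI allI impI)
    fix a b x assume "a \<in> I" "b \<in> I" "a \<le> x \<and> x \<le> b"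
    then show "x \<in> I"
      using local[of a b] by auto
  qed
  moreover have "0 \<in> I"
  proof -
    obtain X where "X \<in> C"
      using C(1) by blast
    moreover from sols[OF this] obtain J \<psi> where "X = graph J \<psi>" "is_solution G J \<psi>"
      by (elim exE conjE)
    ultimately show ?thesis
      using sub is_solutionD(2) by blast
  qed
  ultimately have "is_solution G I \<phi>"
    using local by (intro is_solution_if_locally) blast+
  with graph show ?thesis
    by blast
qed

lemma maximal_solution_extension:
  fixes G :: "'a::euclidean_space \<Rightarrow> 'a set"
  assumes sol: "is_solution G J \<psi>"
  obtains I \<phi> where "is_maximal_solution G I \<phi>" "J \<subseteq> I" "\<forall>s\<in>J. \<phi> s = \<psi> s"
proof -
  define A where "A = {X. \<exists>I \<phi>. X = graph I \<phi> \<and> is_solution G I \<phi> \<and> graph J \<psi> \<subseteq> X}"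
  have "\<exists>U\<in>A. \<forall>X\<in>C. X \<subseteq> U" if C: "C \<in> chains A" for C
  proof (cases "C = {}")
    case True
    then show ?thesis
      using sol unfolding A_def by blast
  next
    case False
    have "C \<subseteq> A"
      using chainsD2[OF C] .
    then have sols: "\<And>X. X \<in> C \<Longrightarrow> \<exists>I \<phi>. X = graph I \<phi> \<and> is_solution G I \<phi>"
      unfolding A_def by blast
    have chain: "\<And>X Y. X \<in> C \<Longrightarrow> Y \<in> C \<Longrightarrow> X \<subseteq> Y \<or> Y \<subseteq> X"
      using chainsD[OF C] by blast
    have "\<exists>I \<phi>. \<Union>C = graph I \<phi> \<and> is_solution G I \<phi>"
      using chain sols by (rule chain_of_solution_graphs_Union[OF False])
    then obtain I \<phi> where "\<Union>C = graph I \<phi>" "is_solution G I \<phi>"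
      by (elim exE conjE)
    moreover have "graph J \<psi> \<subseteq> \<Union>C"
      using \<open>C \<subseteq> A\<close> False unfolding A_def by blast
    ultimately have "\<Union>C \<in> A"
      unfolding A_def by blast
    then show ?thesis
      by blast
  qed
  then have "\<exists>M\<in>A. \<forall>X\<in>A. M \<subseteq> X \<longrightarrow> X = M"
    by (intro Zorn_Lemma2 ballI)
  then obtain M where M: "M \<in> A" "\<forall>X\<in>A. M \<subseteq> X \<longrightarrow> X = M"
    by (elim bexE) (rule that)
  from M(1) obtain I \<phi> where I: "M = graph I \<phi>" "is_solution G I \<phi>" "graph J \<psi> \<subseteq> M"
    unfolding A_def by (elim CollectE exE conjE) (rule that)
  have "is_maximal_solution G I \<phi>"
    unfolding is_maximal_solution_def
  proof (intro conjI I(2) notI)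
    assume "\<exists>J' \<psi>'. is_solution G J' \<psi>' \<and> I \<subset> J' \<and> (\<forall>s\<in>I. \<psi>' s = \<phi> s)"
    then obtain J' \<psi>' where J': "is_solution G J' \<psi>'" "I \<subset> J'" "\<forall>s\<in>I. \<psi>' s = \<phi> s"
      by blast
    then have "M \<subseteq> graph J' \<psi>'"
      unfolding I(1) graph_subset_iff by auto
    moreover from this have "graph J' \<psi>' \<in> A"
      unfolding A_def using J'(1) I(3) by blast
    ultimately have "graph J' \<psi>' = graph I \<phi>"
      using M(2) I(1) by simp
    then show False
      using J'(2) by (metis fst_graph psubset_eq)
  qed
  with I(1,3) show thesis
    using that graph_subset_iff by blast
qed

lemma Rb_memI:
  fixes G :: "'a::euclidean_space \<Rightarrow> 'a set"
  assumes sol: "is_solution G J \<psi>" and t: "t \<in> J"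
  shows "\<psi> t \<in> Rb G t (\<psi> 0)"
proof -
  obtain I \<phi> where I: "is_maximal_solution G I \<phi>" "J \<subseteq> I" "\<forall>s\<in>J. \<phi> s = \<psi> s"
    using maximal_solution_extension[OF sol] by blast
  have "(I, \<phi>) \<in> max_sols G (\<psi> 0)"
    using I is_solutionD(2)[OF sol] unfolding max_sols_def by auto
  moreover have "\<psi> t = \<phi> t" "t \<in> I"
    using I t by auto
  ultimately show ?thesis
  proof (cases "0 \<le> t")
    case True
    then have "t \<in> I \<inter> {0..t}" "\<not> (\<exists>s'\<in>{0..t} \<inter> I. s' > t)"
      using \<open>t \<in> I\<close> by auto
    with \<open>(I, \<phi>) \<in> max_sols G (\<psi> 0)\<close> \<open>\<psi> t = \<phi> t\<close> show ?thesis
      unfolding Rb_def if_P[OF True] by blast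
  next
    case False
    then have "t \<in> I \<inter> {t..0}" "\<not> (\<exists>s'\<in>{t..0} \<inter> I. s' < t)"
      using \<open>t \<in> I\<close> by auto
    with \<open>(I, \<phi>) \<in> max_sols G (\<psi> 0)\<close> \<open>\<psi> t = \<phi> t\<close> show ?thesis
      unfolding Rb_def if_not_P[OF False] by blast
  qed
qed

section \<open>Time reversal\<close>

lemma reverse_reverse [simp]: "reverse (reverse G) = G"
  by (simp add: reverse_def image_image fun_eq_iff)

lemma inflate_reverse: "inflate (reverse G) eps = reverse (inflate G eps)"
proof (rule ext)
  fix z
  have "{u + w |u w. u \<in> uminus ` G z \<and> w \<in> cball 0 (eps z)} =
      uminus ` {u + w |u w. u \<in> G z \<and> w \<in> cball 0 (eps z)}"
  proof (intro equalityI subsetI)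
    fix x assume "x \<in> {u + w |u w. u \<in> uminus ` G z \<and> w \<in> cball 0 (eps z)}"
    then obtain u w where "u \<in> G z" "- w \<in> cball 0 (eps z)" "x = - (u + - w)"
      by auto
    then have "u + - w \<in> {u + w |u w. u \<in> G z \<and> w \<in> cball 0 (eps z)}" "x = - (u + - w)"
      by blast+
    then show "x \<in> uminus ` {u + w |u w. u \<in> G z \<and> w \<in> cball 0 (eps z)}"
      by blast
  next
    fix x assume "x \<in> uminus ` {u + w |u w. u \<in> G z \<and> w \<in> cball 0 (eps z)}"
    then obtain u w where "u \<in> G z" "w \<in> cball 0 (eps z)" "x = - (u + w)"
      by blast
    then have "- u \<in> uminus ` G z" "- w \<in> cball 0 (eps z)" "x = - u + - w"
      by auto
    then show "x \<in> {u + w |u w. u \<in> uminus ` G z \<and> w \<in> cball 0 (eps z)}"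
      by blast
  qed
  then show "inflate (reverse G) eps z = reverse (inflate G eps) z"
    unfolding inflate_def reverse_def .
qed

lemma solution_reverse:
  fixes \<phi> :: "real \<Rightarrow> 'a::euclidean_space"
  assumes sol: "is_solution G I \<phi>"
  shows "is_solution (reverse G) (uminus ` I) (\<lambda>s. \<phi> (- s))"
proof -
  obtain N where N: "negligible N"
    "\<And>t. t \<in> I - N \<Longrightarrow> \<exists>v. (\<phi> has_vector_derivative v) (at t within I) \<and> v \<in> G (\<phi> t)"
    using is_solution_derivativeE[OF sol] by blast
  have "negligible (uminus ` N)"
    by (rule negligible_differentiable_image_negligible[OF _ N(1)]) (auto intro: derivative_intros)
  moreover have "loc_abs_cont_on (uminus ` I) (\<lambda>s. \<phi> (- s))"
    unfolding loc_abs_cont_on_def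
  proof (intro allI impI)
    fix a b assume "{a..b} \<subseteq> uminus ` I"
    then have "{- b..- a} \<subseteq> I"
      by (auto simp: subset_iff image_iff) (metis minus_le_iff le_minus_iff minus_minus)
    from abs_cont_on_reflect[OF solution_abs_cont_on[OF sol this]]
    show "abs_cont_on a b (\<lambda>s. \<phi> (- s))" by simp
  qed
  moreover have "\<exists>v. ((\<lambda>s. \<phi> (- s)) has_vector_derivative v) (at t within uminus ` I) \<and> v \<in> reverse G (\<phi> (- t))"
    if t: "t \<in> uminus ` I - uminus ` N" for t
  proof -
    obtain v where v: "(\<phi> has_vector_derivative v) (at (- t) within I)" "v \<in> G (\<phi> (- t))"
      using N(2)[of "- t"] t by force
    have "(uminus has_vector_derivative (- 1)) (at t within uminus ` I)"
      by (auto intro!: derivative_eq_intros)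
    moreover have "(\<phi> has_vector_derivative v) (at (- t) within uminus ` uminus ` I)"
      using v(1) by (simp add: image_image)
    ultimately have "((\<lambda>s. \<phi> (- s)) has_vector_derivative - v) (at t within uminus ` I)"
      using vector_diff_chain_within by (fastforce simp: o_def)
    moreover have "- v \<in> reverse G (\<phi> (- t))"
      using v(2) unfolding reverse_def by blast
    ultimately show ?thesis by blast
  qed
  ultimately show ?thesis
    using is_solutionI[of "uminus ` I"] is_solutionD(1,2)[OF sol] by force
qed

lemma maximal_solution_reverse:
  fixes \<phi> :: "real \<Rightarrow> 'a::euclidean_space"
  assumes max: "is_maximal_solution G I \<phi>"
  shows "is_maximal_solution (reverse G) (uminus ` I) (\<lambda>s. \<phi> (- s))"
  unfolding is_maximal_solution_def
proof (intro conjI notI)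
  show "is_solution (reverse G) (uminus ` I) (\<lambda>s. \<phi> (- s))"
    using max solution_reverse unfolding is_maximal_solution_def by blast
  assume "\<exists>J \<psi>. is_solution (reverse G) J \<psi> \<and> uminus ` I \<subset> J \<and> (\<forall>s\<in>uminus ` I. \<psi> s = \<phi> (- s))"
  then obtain J \<psi> where J: "is_solution (reverse G) J \<psi>" "uminus ` I \<subset> J" "\<forall>s\<in>uminus ` I. \<psi> s = \<phi> (- s)"
    by (elim exE conjE)
  have "is_solution G (uminus ` J) (\<lambda>s. \<psi> (- s))"
    using solution_reverse[OF J(1)] by simp
  moreover have "uminus ` uminus ` I \<subset> uminus ` J"
    using J(2) by (metis image_strict_mono inj_on_def neg_equal_iff_equal subset_UNIV inj_def)
  then have "I \<subset> uminus ` J"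
    by (simp add: image_image)
  moreover have "\<forall>s\<in>I. \<psi> (- s) = \<phi> s"
    using J(3) by force
  ultimately show False
    using max unfolding is_maximal_solution_def by blast
qed

lemma max_sols_reverse:
  fixes G :: "'a::euclidean_space \<Rightarrow> 'a set"
  shows "(I, \<phi>) \<in> max_sols G y \<Longrightarrow> (uminus ` I, \<lambda>s. \<phi> (- s)) \<in> max_sols (reverse G) y"
  by (simp add: max_sols_def maximal_solution_reverse)

lemma Rb_reverse:
  fixes G :: "'a::euclidean_space \<Rightarrow> 'a set"
  assumes "t > 0"
  shows "Rb G (- t) y = Rb (reverse G) t y"
proof -
  have neg: "Rb H (- t) y = {\<phi> s |I \<phi> s. (I, \<phi>) \<in> max_sols H y \<and> s \<in> I \<inter> {- t..0} \<and>
      \<not> (\<exists>s'\<in>{- t..0} \<inter> I. s' < s)}" for H :: "'a \<Rightarrow> 'a set"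
    unfolding Rb_def using assms by simp
  have pos: "Rb H t y = {\<phi> s |I \<phi> s. (I, \<phi>) \<in> max_sols H y \<and> s \<in> I \<inter> {0..t} \<and>
      \<not> (\<exists>s'\<in>{0..t} \<inter> I. s' > s)}" for H :: "'a \<Rightarrow> 'a set"
    unfolding Rb_def using assms by simp
  show ?thesis
    unfolding neg pos
  proof (intro equalityI subsetI)
    fix z assume "z \<in> {\<phi> s |I \<phi> s. (I, \<phi>) \<in> max_sols G y \<and> s \<in> I \<inter> {- t..0} \<and>
        \<not> (\<exists>s'\<in>{- t..0} \<inter> I. s' < s)}"
    then obtain J \<psi> r where h: "z = \<psi> r" "(J, \<psi>) \<in> max_sols G y" "r \<in> J \<inter> {- t..0}"
        "\<not> (\<exists>s'\<in>{- t..0} \<inter> J. s' < r)"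
      by blast
    have "(uminus ` J, \<lambda>s. \<psi> (- s)) \<in> max_sols (reverse G) y"
      by (rule max_sols_reverse[OF h(2)])
    moreover have "- r \<in> uminus ` J \<inter> {0..t}" "\<not> (\<exists>s'\<in>{0..t} \<inter> uminus ` J. s' > - r)"
      using h(3,4) by force+
    ultimately show "z \<in> {\<phi> s |I \<phi> s. (I, \<phi>) \<in> max_sols (reverse G) y \<and> s \<in> I \<inter> {0..t} \<and>
        \<not> (\<exists>s'\<in>{0..t} \<inter> I. s' > s)}"
      using h(1) by (intro CollectI exI[of _ "uminus ` J"] exI[of _ "\<lambda>s. \<psi> (- s)"] exI[of _ "- r"]) simp
  next
    fix z assume "z \<in> {\<phi> s |I \<phi> s. (I, \<phi>) \<in> max_sols (reverse G) y \<and> s \<in> I \<inter> {0..t} \<and>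
        \<not> (\<exists>s'\<in>{0..t} \<inter> I. s' > s)}"
    then obtain J \<psi> r where h: "z = \<psi> r" "(J, \<psi>) \<in> max_sols (reverse G) y" "r \<in> J \<inter> {0..t}"
        "\<not> (\<exists>s'\<in>{0..t} \<inter> J. s' > r)"
      by blast
    have "(uminus ` J, \<lambda>s. \<psi> (- s)) \<in> max_sols G y"
      using max_sols_reverse[OF h(2)] by simp
    moreover have "- r \<in> uminus ` J \<inter> {- t..0}" "\<not> (\<exists>s'\<in>{- t..0} \<inter> uminus ` J. s' < - r)"
      using h(3,4) by force+
    ultimately show "z \<in> {\<phi> s |I \<phi> s. (I, \<phi>) \<in> max_sols G y \<and> s \<in> I \<inter> {- t..0} \<and>
        \<not> (\<exists>s'\<in>{- t..0} \<inter> I. s' < s)}"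
      using h(1) by (intro CollectI exI[of _ "uminus ` J"] exI[of _ "\<lambda>s. \<psi> (- s)"] exI[of _ "- r"]) simp
  qed
qed

lemma forward_complete_RbE:
  fixes G :: "'a::euclidean_space \<Rightarrow> 'a set"
  assumes fc: "forward_complete G" and t: "0 \<le> t" and y: "y \<in> Rb G t x"
  obtains I \<phi> where "is_solution G I \<phi>" "{0..} \<subseteq> I" "\<phi> 0 = x" "\<phi> t = y"
proof -
  obtain I \<phi> s where h: "y = \<phi> s" "(I, \<phi>) \<in> max_sols G x" "s \<in> I \<inter> {0..t}"
      "\<not> (\<exists>s'\<in>{0..t} \<inter> I. s' > s)"
    using y t unfolding Rb_def by auto
  have sol: "is_solution G I \<phi>" and "\<phi> 0 = x"
    using h(2) unfolding max_sols_def is_maximal_solution_def by auto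
  have "\<not> bdd_above I"
    using fc h(2) unfolding forward_complete_def by blast
  have "{0..} \<subseteq> I"
  proof
    fix r :: real assume "r \<in> {0..}"
    moreover obtain i where "i \<in> I" "r < i"
      using \<open>\<not> bdd_above I\<close> unfolding bdd_above_def by (meson not_le)
    ultimately show "r \<in> I"
      using is_solutionD(1,2)[OF sol] unfolding is_interval_1 by (meson atLeast_iff less_imp_le)
  qed
  then have "t \<in> {0..t} \<inter> I"
    using t by auto
  then have "s = t"
    using h(3,4) by (meson IntD2 atLeastAtMost_iff linorder_neqE_linordered_idom not_le)
  with sol \<open>{0..} \<subseteq> I\<close> \<open>\<phi> 0 = x\<close> h(1) show thesis
    using that by blast
qed

lemma perturbed_endpoints_in_Rb:
  fixes \<phi> :: "real \<Rightarrow> 'a::euclidean_space"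
  assumes sol: "is_solution G I \<phi>" and sub: "{0..t} \<subseteq> I" and t: "t > 0"
    and margin: "\<And>r v d w. r \<in> {0..t} \<Longrightarrow> v \<in> G (\<phi> r) \<Longrightarrow> norm d \<le> \<delta> \<Longrightarrow> norm w \<le> \<delta> / t \<Longrightarrow>
        \<exists>u\<in>G (\<phi> r + d). norm (v + w - u) \<le> eps (\<phi> r + d)"
  shows "cball (\<phi> t) \<delta> \<subseteq> Rb (inflate G eps) t (\<phi> 0)"
    and "cball (\<phi> 0) \<delta> \<subseteq> Rb (inflate G eps) (- t) (\<phi> t)"
proof -
  \<comment> \<open>Adding the drift \<open>s *\<^sub>R w\<close> to \<open>\<phi>\<close> (restarted at time \<open>c\<close>) displaces it by at most \<open>\<delta>\<close> on \<open>[0, t]\<close>.\<close>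
  have drift: "\<phi> (s + c) + s *\<^sub>R w \<in> Rb (inflate G eps) s (\<phi> c)"
    if c: "c \<in> {0..t}" and s: "s \<in> {- c..t - c}" and w: "norm w \<le> \<delta> / t" for c s w
  proof -
    have "is_solution (inflate G eps) {0 - c..t - c} (\<lambda>r. \<phi> (r + c) + r *\<^sub>R w)"
    proof (rule solution_add_drift[OF sol sub])
      show "0 \<le> c" "c \<le> t"
        using c by auto
      fix r v assume r: "r \<in> {0..t}" and v: "v \<in> G (\<phi> r)"
      have "norm ((r - c) *\<^sub>R w) = \<bar>r - c\<bar> * norm w"
        by simp
      also have "\<dots> \<le> t * (\<delta> / t)"
        using r c w by (intro mult_mono) auto
      finally have "norm ((r - c) *\<^sub>R w) \<le> \<delta>"
        using t by simp
      then show "\<exists>u\<in>G (\<phi> r + (r - c) *\<^sub>R w). norm (v + w - u) \<le> eps (\<phi> r + (r - c) *\<^sub>R w)"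
        using margin[OF r v _ w] by blast
    qed
    from Rb_memI[OF this] show ?thesis
      using s by simp
  qed
  show "cball (\<phi> t) \<delta> \<subseteq> Rb (inflate G eps) t (\<phi> 0)"
  proof
    fix z assume "z \<in> cball (\<phi> t) \<delta>"
    then have "norm ((1 / t) *\<^sub>R (z - \<phi> t)) \<le> \<delta> / t"
      using t by (simp add: dist_norm norm_minus_commute divide_simps)
    from drift[OF _ _ this, of 0 t] show "z \<in> Rb (inflate G eps) t (\<phi> 0)"
      using t by simp
  qed
  show "cball (\<phi> 0) \<delta> \<subseteq> Rb (inflate G eps) (- t) (\<phi> t)"
  proof
    fix z assume "z \<in> cball (\<phi> 0) \<delta>"
    then have "norm ((1 / t) *\<^sub>R (\<phi> 0 - z)) \<le> \<delta> / t"
      using t by (simp add: dist_norm divide_simps)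
    from drift[OF _ _ this, of t "- t"] show "z \<in> Rb (inflate G eps) (- t) (\<phi> t)"
      using t by simp
  qed
qed

lemma local_inflation_margin:
  fixes F :: "'a::euclidean_space \<Rightarrow> 'a set"
  assumes cont: "continuous_setmap F" and cpt: "\<And>x. compact (F x)"
    and eps: "continuous_on UNIV eps" "\<And>z. eps z > 0"
  obtains T where "T > 0" "\<And>t. 0 < t \<Longrightarrow> t \<le> T \<Longrightarrow> \<exists>\<delta>>0. \<forall>I \<phi>. is_solution F I \<phi> \<longrightarrow> \<phi> 0 = x \<longrightarrow>
      {0..t} \<subseteq> I \<longrightarrow> (\<forall>r\<in>{0..t}. \<forall>v\<in>F (\<phi> r). \<forall>d w. norm d \<le> \<delta> \<longrightarrow> norm w \<le> \<delta> / t \<longrightarrow>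
        (\<exists>u\<in>F (\<phi> r + d). norm (v + w - u) \<le> eps (\<phi> r + d)))"
proof -
  have "usc_setmap F"
    using cont unfolding continuous_setmap_def by blast
  then obtain M where M: "M > 0" "\<And>p v. p \<in> cball x 1 \<Longrightarrow> v \<in> F p \<Longrightarrow> norm v \<le> M"
    using usc_setmap_bounded_on_compact[where F=F, OF _ cpt compact_cball] by blast
  obtain \<rho> \<mu> where "\<rho> > 0" "\<mu> > 0" and close: "\<And>p q v w. p \<in> cball x 1 \<Longrightarrow> q \<in> cball x 1 \<Longrightarrow>
      dist p q < \<rho> \<Longrightarrow> v \<in> F p \<Longrightarrow> norm w \<le> \<mu> \<Longrightarrow> \<exists>u\<in>F q. norm (v + w - u) \<le> eps q"
    using inflation_margin_on_compact[where F=F, OF cont cpt compact_cball continuous_on_subset[OF eps(1)] eps(2)]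
    by blast
  \<comment> \<open>Up to time \<open>1/(2M)\<close> every solution from \<open>x\<close> stays in \<open>cball x (1/2)\<close>.\<close>
  have "\<exists>\<delta>>0. \<forall>I \<phi>. is_solution F I \<phi> \<longrightarrow> \<phi> 0 = x \<longrightarrow> {0..t} \<subseteq> I \<longrightarrow>
      (\<forall>r\<in>{0..t}. \<forall>v\<in>F (\<phi> r). \<forall>d w. norm d \<le> \<delta> \<longrightarrow> norm w \<le> \<delta> / t \<longrightarrow>
        (\<exists>u\<in>F (\<phi> r + d). norm (v + w - u) \<le> eps (\<phi> r + d)))"
    if t: "0 < t" "t \<le> 1 / (2 * M)" for t
  proof (intro exI[of _ "min (\<rho> / 2) (min (t * \<mu>) (1 / 2))"] conjI allI impI ballI)
    let ?\<delta> = "min (\<rho> / 2) (min (t * \<mu>) (1 / 2))"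
    show "?\<delta> > 0"
      using \<open>\<rho> > 0\<close> \<open>\<mu> > 0\<close> t by simp
    fix I \<phi> r v and d w :: 'a
    assume sol: "is_solution F I \<phi>" "\<phi> 0 = x" "{0..t} \<subseteq> I" and r: "r \<in> {0..t}" and v: "v \<in> F (\<phi> r)"
      and d: "norm d \<le> ?\<delta>" and w: "norm w \<le> ?\<delta> / t"
    have "M * t \<le> M * (1 / (2 * M))"
      using t(2) M(1) by (intro mult_left_mono) auto
    then have Mt: "M * t \<le> 1 / 2"
      using M(1) by simp
    have bound: "\<And>p v. p \<in> cball (\<phi> 0) 1 \<Longrightarrow> v \<in> F p \<Longrightarrow> norm v \<le> M"
      using M(2) sol(2) by simp
    have "norm (\<phi> r - \<phi> 0) \<le> M * r"
    proof (rule solution_displacement_le[OF sol(1,3) less_imp_le[OF M(1)]])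
      show "M * t < 1"
        using Mt by simp
    qed (use bound r in auto)
    also have "\<dots> \<le> M * t"
      using r M(1) by (intro mult_left_mono) auto
    finally have "norm (\<phi> r - x) \<le> 1 / 2"
      using Mt sol(2) by simp
    then have "\<phi> r \<in> cball x 1" "\<phi> r + d \<in> cball x 1"
      using d norm_triangle_ineq[of "\<phi> r - x" d] by (auto simp: dist_norm norm_minus_commute algebra_simps)
    moreover have "dist (\<phi> r) (\<phi> r + d) < \<rho>" "norm w \<le> \<mu>"
      using d w t \<open>\<rho> > 0\<close> by (auto simp: dist_norm divide_simps)
    ultimately show "\<exists>u\<in>F (\<phi> r + d). norm (v + w - u) \<le> eps (\<phi> r + d)"
      using close v by blast
  qed
  moreover have "1 / (2 * M) > 0"
    using M(1) by simp
  ultimately show thesis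
    using that by blast
qed

lemma Rb_inflate_contains_balls:
  fixes F :: "'a::euclidean_space \<Rightarrow> 'a set"
  assumes cont: "continuous_setmap F" and cpt: "\<And>x. compact (F x)" and fc: "forward_complete F"
    and eps: "continuous_on UNIV eps" "\<And>z. eps z > 0"
  obtains T where "T > 0" "\<And>t. 0 < t \<Longrightarrow> t \<le> T \<Longrightarrow> \<exists>\<delta>>0. \<forall>y\<in>Rb F t x.
      cball y \<delta> \<subseteq> Rb (inflate F eps) t x \<and> cball x \<delta> \<subseteq> Rb (inflate F eps) (- t) y"
proof -
  obtain T where "T > 0" and margin: "\<And>t. 0 < t \<Longrightarrow> t \<le> T \<Longrightarrow> \<exists>\<delta>>0. \<forall>I \<phi>. is_solution F I \<phi> \<longrightarrow>
      \<phi> 0 = x \<longrightarrow> {0..t} \<subseteq> I \<longrightarrow> (\<forall>r\<in>{0..t}. \<forall>v\<in>F (\<phi> r). \<forall>d w. norm d \<le> \<delta> \<longrightarrow>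
        norm w \<le> \<delta> / t \<longrightarrow> (\<exists>u\<in>F (\<phi> r + d). norm (v + w - u) \<le> eps (\<phi> r + d)))"
    using local_inflation_margin[OF cont cpt eps] by metis
  have "\<exists>\<delta>>0. \<forall>y\<in>Rb F t x. cball y \<delta> \<subseteq> Rb (inflate F eps) t x \<and> cball x \<delta> \<subseteq> Rb (inflate F eps) (- t) y"
    if t: "0 < t" "t \<le> T" for t
  proof -
    obtain \<delta> where "\<delta> > 0" and \<delta>: "\<forall>I \<phi>. is_solution F I \<phi> \<longrightarrow> \<phi> 0 = x \<longrightarrow> {0..t} \<subseteq> I \<longrightarrow>
        (\<forall>r\<in>{0..t}. \<forall>v\<in>F (\<phi> r). \<forall>d w. norm d \<le> \<delta> \<longrightarrow> norm w \<le> \<delta> / t \<longrightarrow>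
          (\<exists>u\<in>F (\<phi> r + d). norm (v + w - u) \<le> eps (\<phi> r + d)))"
      using margin[OF t] by blast
    have "cball y \<delta> \<subseteq> Rb (inflate F eps) t x \<and> cball x \<delta> \<subseteq> Rb (inflate F eps) (- t) y"
      if y: "y \<in> Rb F t x" for y
    proof -
      obtain I \<phi> where sol: "is_solution F I \<phi>" "{0..} \<subseteq> I" "\<phi> 0 = x" "\<phi> t = y"
        using forward_complete_RbE[OF fc _ y] t by auto
      then have "{0..t} \<subseteq> I"
        by auto
      from perturbed_endpoints_in_Rb[OF sol(1) this t(1)] \<delta> sol show ?thesis
        by (metis \<open>{0..t} \<subseteq> I\<close>)
    qed
    with \<open>\<delta> > 0\<close> show ?thesis
      by blast
  qed
  with \<open>T > 0\<close> show thesis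
    using that by blast
qed

theorem lemma3:
  fixes F :: "real ^ 'n \<Rightarrow> (real ^ 'n) set"
  assumes "continuous_setmap F"
    and "\<And>x. F x \<noteq> {} \<and> compact (F x) \<and> convex (F x)"
    and "forward_complete F"
  shows "\<forall>x (eps :: real ^ 'n \<Rightarrow> real). continuous_on UNIV eps \<and> (\<forall>z. eps z > 0) \<longrightarrow>
           (\<exists>T>0. \<forall>t. 0 < t \<and> t \<le> T \<longrightarrow>
              (\<exists>\<delta>>0. \<forall>y \<in> Rb F t x - {x}.
                  cball y \<delta> \<subseteq> Rb (inflate F eps) t x \<and>
                  cball x \<delta> \<subseteq> Rb (inflate F eps) (-t) y \<and>
                  Rb (inflate F eps) (-t) y = Rb (inflate (reverse F) eps) t y))"
proof (intro allI impI)
  fix x :: "real ^ 'n" and eps :: "real ^ 'n \<Rightarrow> real"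
  assume eps: "continuous_on UNIV eps \<and> (\<forall>z. eps z > 0)"
  obtain T where "T > 0" and balls: "\<And>t. 0 < t \<Longrightarrow> t \<le> T \<Longrightarrow> \<exists>\<delta>>0. \<forall>y\<in>Rb F t x.
      cball y \<delta> \<subseteq> Rb (inflate F eps) t x \<and> cball x \<delta> \<subseteq> Rb (inflate F eps) (- t) y"
    using Rb_inflate_contains_balls[OF assms(1) _ assms(3)] assms(2) eps by metis
  have reverse: "Rb (inflate F eps) (- t) y = Rb (inflate (reverse F) eps) t y" if "t > 0" for t y
    unfolding inflate_reverse by (rule Rb_reverse[OF that])
  show "\<exists>T>0. \<forall>t. 0 < t \<and> t \<le> T \<longrightarrow> (\<exists>\<delta>>0. \<forall>y \<in> Rb F t x - {x}.
      cball y \<delta> \<subseteq> Rb (inflate F eps) t x \<and> cball x \<delta> \<subseteq> Rb (inflate F eps) (-t) y \<and>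
      Rb (inflate F eps) (-t) y = Rb (inflate (reverse F) eps) t y)"
  proof (rule exI[of _ T], intro conjI allI impI)
    show "T > 0"
      by (rule \<open>T > 0\<close>)
  next
    fix t assume t: "0 < t \<and> t \<le> T"
    then obtain \<delta> where "\<delta> > 0" "\<forall>y\<in>Rb F t x.
        cball y \<delta> \<subseteq> Rb (inflate F eps) t x \<and> cball x \<delta> \<subseteq> Rb (inflate F eps) (- t) y"
      using balls by blast
    with reverse[of t] t show "\<exists>\<delta>>0. \<forall>y \<in> Rb F t x - {x}. cball y \<delta> \<subseteq> Rb (inflate F eps) t x \<and>
        cball x \<delta> \<subseteq> Rb (inflate F eps) (-t) y \<and> Rb (inflate F eps) (-t) y = Rb (inflate (reverse F) eps) t y"
      by blast
  qed
qed

end
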